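(* Let $X_1,\dots,X_N$ be i.i.d. with distribution function $F$, let $0<\alpha<1$, and suppose $f=F'$ exists and is positive and Lipschitz in a neighborhood of $\xi_\alpha=F^{-1}(\alpha)$. Let $G$ be a function defined in a neighborhood of $\xi_\alpha$ such that $g=G'$ exists there and satisfies a Lipschitz condition. Let $k=k(N)$ be integers with $k=\alpha N+O(1)$ as $N\to\infty$, and let $N_\alpha=\#\{i:X_i\le\xi_\alpha\}$. Then $$\frac1N\sum_{i=k}^{N_\alpha}\big(G(X_{i:N})-G(\xi_\alpha)\big)=-\frac{(N_\alpha-\alpha N)^2}{2N^2}\,\frac{g(\xi_\alpha)}{f(\xi_\alpha)}+R_N,$$ where for every $c>0$ there is $A>0$ not depending on $N$ with $$P\big(|R_N|>A(\log N/N)^{5/4}\big)=O(N^{-c})\quad\text{as }N\to\infty.$$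
   Context: $X_{1:N}\le\dots\le X_{N:N}$ are the order statistics; $F^{-1}(u)=\inf\{x:F(x)\ge u\}$. Summation convention: for integers $k,m$, $\sum_{i=k}^m(\cdot)_i=\mathrm{sign}[m-k]\sum_{i=k\wedge m}^{k\vee m}(\cdot)_i$. *)

theory Defs
  imports "HOL-Probability.Probability"
begin

definition quantile :: "(real \<Rightarrow> real) \<Rightarrow> real \<Rightarrow> real" where
  "quantile F u = Inf {x. F x \<ge> u}"

text \<open>Order statistics of the first N observations X 0, ..., X (N-1), 1-based:
  order_stat X N w i = X_{i:N}(w) for 1 <= i <= N (unspecified otherwise).\<close>
definition order_stat :: "(nat \<Rightarrow> 'a \<Rightarrow> real) \<Rightarrow> nat \<Rightarrow> 'a \<Rightarrow> int \<Rightarrow> real" where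
  "order_stat X N w i = sort (map (\<lambda>j. X j w) [0..<N]) ! (nat i - 1)"

text \<open>Summation convention: sum_{i=k}^m a_i = sign(m-k) * sum_{i = min k m}^{max k m} a_i.\<close>
definition conv_sum :: "int \<Rightarrow> int \<Rightarrow> (int \<Rightarrow> real) \<Rightarrow> real" where
  "conv_sum k m a = sgn (real_of_int (m - k)) * (\<Sum>i\<in>{min k m..max k m}. a i)"

definition count_le :: "(nat \<Rightarrow> 'a \<Rightarrow> real) \<Rightarrow> nat \<Rightarrow> real \<Rightarrow> 'a \<Rightarrow> nat" where
  "count_le X N \<xi> w = card {i. i < N \<and> X i w \<le> \<xi>}"

end

theory Submission
  imports Defs
begin

text \<open>
  Put q = (log N / N)^(1/4). Bernstein's inequality, applied at \<xi> and at the 2N + 1 points of a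
  grid of mesh r/N on [\<xi> - r, \<xi> + r] with r of order q^2, shows that outside an event of
  probability O(N^(-c)) we have |N_\<alpha> - \<alpha>N| = O(N q^2) and, by monotonicity of the empirical
  distribution function between grid points, #{i. X_i \<le> t} - N_\<alpha> = N (F t - \<alpha>) + O(N q^3)
  uniformly for |t - \<xi>| \<le> r. Inverting this gives the Bahadur representation
  X_{i:N} = \<xi> + (i - N_\<alpha>) / (N f(\<xi>)) + O(q^3) for all i between k and N_\<alpha>, so each summand
  G(X_{i:N}) - G(\<xi>) is g(\<xi>) (i - N_\<alpha>) / (N f(\<xi>)) + O(q^3). Summing the arithmetic
  progression over the O(N q^2) indices yields - g(\<xi>) |N_\<alpha> - k| (|N_\<alpha> - k| + 1) / (2 N f(\<xi>))
  + O(N q^5), and replacing k by \<alpha>N changes this by O(N q^5) as well.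
\<close>

section \<open>Bernstein's inequality\<close>

lemma exp_le_one_plus_x_plus_sq:
  fixes x :: real assumes "\<bar>x\<bar> \<le> 1" shows "exp x \<le> 1 + x + x\<^sup>2"
proof (cases "x \<ge> 0")
  case True
  then show ?thesis using exp_bound[of x] assms by auto
next
  case False
  have "exp x = 1 / exp (-x)" by (simp add: exp_minus field_simps)
  also have "\<dots> \<le> 1 / (1 - x)"
    using exp_ge_add_one_self[of "-x"] False by (intro divide_left_mono) auto
  also have "\<dots> \<le> 1 + x + x\<^sup>2"
  proof -
    have "(1 + x + x\<^sup>2) * (1 - x) = 1 - x ^ 3" by (simp add: algebra_simps power2_eq_square power3_eq_cube)
    moreover have "x ^ 3 \<le> 0" using False by (simp add: power3_eq_cube mult_nonneg_nonpos)
    ultimately show ?thesis using False by (simp add: divide_simps)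
  qed
  finally show ?thesis .
qed

context prob_space
begin

lemma centered_exp_moment_le:
  fixes Z :: "'a \<Rightarrow> real"
  assumes Z[measurable]: "Z \<in> borel_measurable M"
    and bound: "\<And>\<omega>. \<omega> \<in> space M \<Longrightarrow> \<bar>Z \<omega>\<bar> \<le> 1"
    and second_moment: "expectation (\<lambda>\<omega>. (Z \<omega>)\<^sup>2) \<le> p" and l: "0 \<le> l" "l \<le> 1"
  shows "expectation (\<lambda>\<omega>. exp (l * (Z \<omega> - expectation Z))) \<le> exp (l\<^sup>2 * p)"
proof -
  define \<mu> where "\<mu> = expectation Z"
  have lZ: "\<bar>l * Z \<omega>\<bar> \<le> 1" if "\<omega> \<in> space M" for \<omega>
    using bound[OF that] l by (simp add: abs_mult mult_le_one)
  have int_Z: "integrable M Z"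
    by (rule integrable_const_bound[where B=1]) (use bound in auto)
  have int_Z2: "integrable M (\<lambda>\<omega>. (Z \<omega>)\<^sup>2)"
    by (rule integrable_const_bound[where B=1]) (auto simp: bound abs_square_le_1)
  have int_exp: "integrable M (\<lambda>\<omega>. exp (l * Z \<omega>))"
    by (rule integrable_const_bound[where B="exp 1"]) (use lZ in \<open>auto simp: abs_le_iff\<close>)
  have "expectation (\<lambda>\<omega>. exp (l * Z \<omega>)) \<le> expectation (\<lambda>\<omega>. 1 + l * Z \<omega> + l\<^sup>2 * (Z \<omega>)\<^sup>2)"
    using exp_le_one_plus_x_plus_sq[OF lZ] int_Z int_Z2 int_exp
    by (intro integral_mono) (auto simp: power_mult_distrib)
  also have "\<dots> = 1 + l * \<mu> + l\<^sup>2 * expectation (\<lambda>\<omega>. (Z \<omega>)\<^sup>2)"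
    using int_Z int_Z2 by (simp add: \<mu>_def prob_space)
  also have "\<dots> \<le> 1 + (l * \<mu> + l\<^sup>2 * p)"
    using second_moment by (simp add: mult_left_mono)
  also have "\<dots> \<le> exp (l * \<mu> + l\<^sup>2 * p)" by (rule exp_ge_add_one_self)
  finally have moment: "expectation (\<lambda>\<omega>. exp (l * Z \<omega>)) \<le> exp (l * \<mu> + l\<^sup>2 * p)" .
  have "expectation (\<lambda>\<omega>. exp (l * (Z \<omega> - \<mu>))) = exp (- (l * \<mu>)) * expectation (\<lambda>\<omega>. exp (l * Z \<omega>))"
    by (simp add: right_diff_distrib exp_diff exp_minus field_simps)
  also have "\<dots> \<le> exp (- (l * \<mu>)) * exp (l * \<mu> + l\<^sup>2 * p)" using moment by simp
  also have "\<dots> = exp (l\<^sup>2 * p)" by (simp flip: exp_add)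
  finally show ?thesis by (simp add: \<mu>_def)
qed

lemma sum_upper_tail_le:
  fixes Z :: "'i \<Rightarrow> 'a \<Rightarrow> real"
  assumes fin: "finite I" and indep: "indep_vars (\<lambda>_. borel) Z I"
    and bound: "\<And>i \<omega>. i \<in> I \<Longrightarrow> \<omega> \<in> space M \<Longrightarrow> \<bar>Z i \<omega>\<bar> \<le> 1"
    and second_moment: "\<And>i. i \<in> I \<Longrightarrow> expectation (\<lambda>\<omega>. (Z i \<omega>)\<^sup>2) \<le> p"
    and l: "0 < l" "l \<le> 1"
  shows "prob {\<omega> \<in> space M. \<epsilon> \<le> (\<Sum>i\<in>I. Z i \<omega>) - (\<Sum>i\<in>I. expectation (Z i))}
           \<le> exp (real (card I) * l\<^sup>2 * p - l * \<epsilon>)"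
proof -
  have meas: "Z i \<in> borel_measurable M" if "i \<in> I" for i
    using indep that unfolding indep_vars_def by blast
  define Y where "Y i \<omega> = exp (l * (Z i \<omega> - expectation (Z i)))" for i \<omega>
  have indep_Y: "indep_vars (\<lambda>_. borel) Y I"
    unfolding Y_def by (rule indep_vars_compose2[OF indep]) auto
  have int_Y: "integrable M (Y i)" if "i \<in> I" for i
  proof (rule integrable_const_bound[where B="exp (l * (1 + \<bar>expectation (Z i)\<bar>))"])
    show "AE \<omega> in M. norm (Y i \<omega>) \<le> exp (l * (1 + \<bar>expectation (Z i)\<bar>))"
    proof (rule AE_I2)
      fix \<omega> assume "\<omega> \<in> space M"
      then have "Z i \<omega> - expectation (Z i) \<le> 1 + \<bar>expectation (Z i)\<bar>"
        using bound[OF that] by (smt (verit))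
      then show "norm (Y i \<omega>) \<le> exp (l * (1 + \<bar>expectation (Z i)\<bar>))"
        using l by (simp add: Y_def mult_left_mono)
    qed
    show "Y i \<in> borel_measurable M"
      using meas[OF that] unfolding Y_def by measurable
  qed
  define u where "u \<omega> = (\<Prod>i\<in>I. Y i \<omega>)" for \<omega>
  have int_u: "integrable M u"
    unfolding u_def by (rule indep_vars_integrable[OF fin indep_Y int_Y])
  have u_eq: "u \<omega> = exp (l * ((\<Sum>i\<in>I. Z i \<omega>) - (\<Sum>i\<in>I. expectation (Z i))))" for \<omega>
    unfolding u_def Y_def
    by (simp add: exp_sum[OF fin, symmetric] sum_distrib_left sum_subtractf[symmetric] right_diff_distrib)
  have "prob {\<omega> \<in> space M. \<epsilon> \<le> (\<Sum>i\<in>I. Z i \<omega>) - (\<Sum>i\<in>I. expectation (Z i))}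
        \<le> prob {\<omega> \<in> space M. exp (l * \<epsilon>) \<le> u \<omega>}"
  proof (rule finite_measure_mono)
    have [measurable]: "u \<in> borel_measurable M" using int_u by blast
    show "{\<omega> \<in> space M. exp (l * \<epsilon>) \<le> u \<omega>} \<in> events" by measurable
  qed (use l in \<open>auto simp: u_eq\<close>)
  also have "\<dots> \<le> expectation u / exp (l * \<epsilon>)"
    by (rule integral_Markov_inequality_measure[OF int_u, where A="space M"]) (auto simp: u_eq)
  also have "expectation u = (\<Prod>i\<in>I. expectation (Y i))"
    unfolding u_def by (rule indep_vars_lebesgue_integral[OF fin indep_Y int_Y])
  also have "\<dots> \<le> (\<Prod>i\<in>I. exp (l\<^sup>2 * p))"
    unfolding Y_def using meas bound second_moment l
    by (intro prod_mono conjI centered_exp_moment_le) auto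
  finally show ?thesis
    by (simp add: divide_right_mono exp_diff prod_constant exp_of_nat_mult[symmetric] mult.assoc)
qed

(* Bernstein-type bound: the constraint on \<epsilon> makes l = \<epsilon> / (2 n p) admissible in sum_upper_tail_le. *)
lemma sum_deviation_le:
  fixes Z :: "'i \<Rightarrow> 'a \<Rightarrow> real"
  assumes fin: "finite I" and ne: "I \<noteq> {}" and indep: "indep_vars (\<lambda>_. borel) Z I"
    and bound: "\<And>i \<omega>. i \<in> I \<Longrightarrow> \<omega> \<in> space M \<Longrightarrow> \<bar>Z i \<omega>\<bar> \<le> 1"
    and second_moment: "\<And>i. i \<in> I \<Longrightarrow> expectation (\<lambda>\<omega>. (Z i \<omega>)\<^sup>2) \<le> p"
    and p: "p > 0" and \<epsilon>: "\<epsilon> > 0" "\<epsilon> \<le> 2 * real (card I) * p"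
  shows "prob {\<omega> \<in> space M. \<epsilon> \<le> \<bar>(\<Sum>i\<in>I. Z i \<omega>) - (\<Sum>i\<in>I. expectation (Z i))\<bar>}
           \<le> 2 * exp (- \<epsilon>\<^sup>2 / (4 * real (card I) * p))"
proof -
  define n where "n = real (card I)"
  have n: "n > 0" using fin ne by (simp add: n_def card_gt_0_iff)
  define l where "l = \<epsilon> / (2 * n * p)"
  have l: "0 < l" "l \<le> 1" using n p \<epsilon> by (auto simp: l_def n_def field_simps)
  have exponent: "n * l\<^sup>2 * p - l * \<epsilon> = - \<epsilon>\<^sup>2 / (4 * n * p)"
    using n p by (simp add: l_def field_simps power2_eq_square)
  have meas[measurable]: "Z i \<in> borel_measurable M" if "i \<in> I" for i
    using indep that unfolding indep_vars_def by blast
  define S where "S \<sigma> \<omega> = (\<Sum>i\<in>I. \<sigma> * Z i \<omega>) - (\<Sum>i\<in>I. expectation (\<lambda>\<omega>. \<sigma> * Z i \<omega>))" for \<sigma> \<omega>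
  have tail: "prob {\<omega> \<in> space M. \<epsilon> \<le> S \<sigma> \<omega>} \<le> exp (- \<epsilon>\<^sup>2 / (4 * n * p))" if "\<bar>\<sigma>\<bar> = 1" for \<sigma>
  proof -
    have "indep_vars (\<lambda>_. borel) (\<lambda>i \<omega>. \<sigma> * Z i \<omega>) I"
      by (rule indep_vars_compose2[OF indep, where Y="\<lambda>i x. \<sigma> * x"]) auto
    moreover have "\<sigma>\<^sup>2 = 1" using that by (metis power2_abs power_one)
    ultimately show ?thesis
      using sum_upper_tail_le[of I "\<lambda>i \<omega>. \<sigma> * Z i \<omega>" p l \<epsilon>] fin bound second_moment that exponent l
      by (simp add: S_def n_def abs_mult power_mult_distrib)
  qed
  have "{\<omega> \<in> space M. \<epsilon> \<le> \<bar>(\<Sum>i\<in>I. Z i \<omega>) - (\<Sum>i\<in>I. expectation (Z i))\<bar>}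
      = {\<omega> \<in> space M. \<epsilon> \<le> S 1 \<omega>} \<union> {\<omega> \<in> space M. \<epsilon> \<le> S (-1) \<omega>}"
    by (auto simp: S_def sum_negf abs_if)
  also have "prob \<dots> \<le> prob {\<omega> \<in> space M. \<epsilon> \<le> S 1 \<omega>} + prob {\<omega> \<in> space M. \<epsilon> \<le> S (-1) \<omega>}"
    by (rule measure_Un_le) (auto simp: S_def)
  finally show ?thesis using tail[of 1] tail[of "-1"] by (simp add: n_def)
qed

end

section \<open>Local expansions from a Lipschitz derivative\<close>

lemma mvt_between:
  fixes H h :: "real \<Rightarrow> real"
  assumes der: "\<And>x. x \<in> {a<..<b} \<Longrightarrow> (H has_real_derivative h x) (at x)"
    and x0: "x0 \<in> {a<..<b}" and x: "x \<in> {a<..<b}"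
  obtains z where "z \<in> {a<..<b}" "\<bar>z - x0\<bar> \<le> \<bar>x - x0\<bar>" "H x - H x0 = (x - x0) * h z"
proof (cases x0 x rule: linorder_cases)
  case less
  with MVT2[of x0 x H h] der x0 x obtain z where "x0 < z" "z < x" "H x - H x0 = (x - x0) * h z" by auto
  then show ?thesis using x0 x by (intro that[of z]) auto
next
  case greater
  with MVT2[of x x0 H h] der x0 x obtain z where "x < z" "z < x0" "H x0 - H x = (x0 - x) * h z" by auto
  then show ?thesis using x0 x by (intro that[of z]) (auto simp: algebra_simps)
qed (use that x0 in auto)

lemma lipschitz_deriv_taylor:
  fixes H h :: "real \<Rightarrow> real"
  assumes der: "\<And>x. x \<in> {a<..<b} \<Longrightarrow> (H has_real_derivative h x) (at x)"
    and lip: "\<And>x y. x \<in> {a<..<b} \<Longrightarrow> y \<in> {a<..<b} \<Longrightarrow> \<bar>h x - h y\<bar> \<le> L * \<bar>x - y\<bar>"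
    and L: "L \<ge> 0" and x0: "x0 \<in> {a<..<b}" and x: "x \<in> {a<..<b}"
  shows "\<bar>H x - H x0 - h x0 * (x - x0)\<bar> \<le> L * (x - x0)\<^sup>2"
proof -
  obtain z where z: "z \<in> {a<..<b}" "\<bar>z - x0\<bar> \<le> \<bar>x - x0\<bar>" "H x - H x0 = (x - x0) * h z"
    using mvt_between[OF der x0 x] .
  have "\<bar>H x - H x0 - h x0 * (x - x0)\<bar> = \<bar>x - x0\<bar> * \<bar>h z - h x0\<bar>"
    by (simp add: z(3) abs_mult[symmetric] algebra_simps)
  also have "\<dots> \<le> \<bar>x - x0\<bar> * (L * \<bar>x - x0\<bar>)"
    using lip[OF z(1) x0] mult_left_mono[OF z(2) L] by (intro mult_left_mono) auto
  finally show ?thesis by (simp add: power2_eq_square algebra_simps)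
qed

lemma lipschitz_deriv_increment:
  fixes H h :: "real \<Rightarrow> real"
  assumes der: "\<And>x. x \<in> {a<..<b} \<Longrightarrow> (H has_real_derivative h x) (at x)"
    and lip: "\<And>x y. x \<in> {a<..<b} \<Longrightarrow> y \<in> {a<..<b} \<Longrightarrow> \<bar>h x - h y\<bar> \<le> L * \<bar>x - y\<bar>"
    and L: "L \<ge> 0" and x0: "x0 \<in> {a<..<b}" and s: "s \<in> {a<..<b}" and t: "t \<in> {a<..<b}"
  shows "\<bar>H t - H s\<bar> \<le> (\<bar>h x0\<bar> + L * (b - a)) * \<bar>t - s\<bar>"
proof -
  obtain z where z: "z \<in> {a<..<b}" "H t - H s = (t - s) * h z"
    using mvt_between[OF der s t] by blast
  have "\<bar>z - x0\<bar> \<le> b - a" using z(1) x0 by auto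
  then have "\<bar>h z\<bar> \<le> \<bar>h x0\<bar> + L * (b - a)"
    using lip[OF z(1) x0] mult_left_mono[of "\<bar>z - x0\<bar>" "b - a" L] L by linarith
  then have "\<bar>h z\<bar> * \<bar>t - s\<bar> \<le> (\<bar>h x0\<bar> + L * (b - a)) * \<bar>t - s\<bar>"
    by (rule mult_right_mono) simp
  then show ?thesis using z(2) by (simp add: abs_mult mult.commute)
qed

lemma lipschitz_deriv_local_bounds:
  fixes H h :: "real \<Rightarrow> real"
  assumes "\<exists>\<delta>>0. \<exists>L. \<forall>x\<in>{\<xi> - \<delta><..<\<xi> + \<delta>}. (H has_real_derivative h x) (at x) \<and>
             (\<forall>y\<in>{\<xi> - \<delta><..<\<xi> + \<delta>}. \<bar>h x - h y\<bar> \<le> L * \<bar>x - y\<bar>)"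
  obtains \<delta> L M where "\<delta> > 0" "L \<ge> 0" "M > 0" "isCont H \<xi>"
    "\<And>t. \<bar>t - \<xi>\<bar> < \<delta> \<Longrightarrow> \<bar>H t - H \<xi> - h \<xi> * (t - \<xi>)\<bar> \<le> L * (t - \<xi>)\<^sup>2"
    "\<And>s t. \<bar>s - \<xi>\<bar> < \<delta> \<Longrightarrow> \<bar>t - \<xi>\<bar> < \<delta> \<Longrightarrow> \<bar>H t - H s\<bar> \<le> M * \<bar>t - s\<bar>"
proof -
  obtain \<delta> L0 where \<delta>: "\<delta> > 0" and H: "\<And>x. x \<in> {\<xi> - \<delta><..<\<xi> + \<delta>} \<Longrightarrow>
      (H has_real_derivative h x) (at x) \<and> (\<forall>y\<in>{\<xi> - \<delta><..<\<xi> + \<delta>}. \<bar>h x - h y\<bar> \<le> L0 * \<bar>x - y\<bar>)"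
    using assms by blast
  define L where "L = \<bar>L0\<bar>"
  have der: "\<And>x. x \<in> {\<xi> - \<delta><..<\<xi> + \<delta>} \<Longrightarrow> (H has_real_derivative h x) (at x)"
    using H by blast
  have lip: "\<bar>h x - h y\<bar> \<le> L * \<bar>x - y\<bar>" if "x \<in> {\<xi> - \<delta><..<\<xi> + \<delta>}" "y \<in> {\<xi> - \<delta><..<\<xi> + \<delta>}" for x y
  proof -
    have "\<bar>h x - h y\<bar> \<le> L0 * \<bar>x - y\<bar>" using H[OF that(1)] that(2) by blast
    also have "\<dots> \<le> L * \<bar>x - y\<bar>" unfolding L_def by (intro mult_right_mono) auto
    finally show ?thesis .
  qed
  have \<xi>: "\<xi> \<in> {\<xi> - \<delta><..<\<xi> + \<delta>}" using \<delta> by simp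
  show ?thesis
  proof (rule that[of \<delta> L "\<bar>h \<xi>\<bar> + L * (2 * \<delta>) + 1"])
    show "isCont H \<xi>" using DERIV_isCont[OF der[OF \<xi>]] .
    show "\<bar>H t - H \<xi> - h \<xi> * (t - \<xi>)\<bar> \<le> L * (t - \<xi>)\<^sup>2" if "\<bar>t - \<xi>\<bar> < \<delta>" for t
      using lipschitz_deriv_taylor[OF der lip _ \<xi>, where x=t] that by (simp add: L_def abs_less_iff)
    show "\<bar>H t - H s\<bar> \<le> (\<bar>h \<xi>\<bar> + L * (2 * \<delta>) + 1) * \<bar>t - s\<bar>" if "\<bar>s - \<xi>\<bar> < \<delta>" "\<bar>t - \<xi>\<bar> < \<delta>" for s t
    proof -
      have "\<bar>H t - H s\<bar> \<le> (\<bar>h \<xi>\<bar> + L * (2 * \<delta>)) * \<bar>t - s\<bar>"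
        using lipschitz_deriv_increment[OF der lip _ \<xi>, of s t] that by (simp add: L_def abs_less_iff)
      then show ?thesis by (simp add: distrib_right)
    qed
  qed (use \<delta> in \<open>auto simp: L_def intro!: add_nonneg_pos\<close>)
qed

section \<open>The empirical distribution function of an i.i.d. sample\<close>

lemma real_count_le_eq_sum: "real (count_le X N t \<omega>) = (\<Sum>j<N. of_bool (X j \<omega> \<le> t))"
proof -
  have "{i. i < N \<and> X i \<omega> \<le> t} = {..<N} \<inter> {i. X i \<omega> \<le> t}" by auto
  then show ?thesis by (simp add: count_le_def)
qed

lemma count_le_mono: "s \<le> t \<Longrightarrow> count_le X N s \<omega> \<le> count_le X N t \<omega>"
  unfolding count_le_def by (rule card_mono) auto

lemma count_le_le: "count_le X N t \<omega> \<le> N"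
  using card_mono[of "{..<N}" "{i. i < N \<and> X i \<omega> \<le> t}"] by (auto simp: count_le_def)

locale iid_sample = prob_space M for M :: "'a measure" +
  fixes X :: "nat \<Rightarrow> 'a \<Rightarrow> real" and F :: "real \<Rightarrow> real"
  assumes X_measurable[measurable]: "\<And>i. X i \<in> borel_measurable M"
    and indep: "indep_vars (\<lambda>_. borel) X UNIV"
    and ident: "\<And>i. distr M borel (X i) = distr M borel (X 0)"
    and F_def: "\<And>x. F x = prob {\<omega> \<in> space M. X 0 \<omega> \<le> x}"
begin

lemma count_le_measurable[measurable]: "(\<lambda>\<omega>. real (count_le X N t \<omega>)) \<in> borel_measurable M"
  unfolding real_count_le_eq_sum by measurable

lemma F_mono: "s \<le> t \<Longrightarrow> F s \<le> F t"
  unfolding F_def by (intro finite_measure_mono) auto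

lemma integrable_of_bool_le: "integrable M (\<lambda>\<omega>. of_bool (X j \<omega> \<le> x) :: real)"
  by (rule integrable_const_bound[where B=1]) auto

lemma expectation_of_bool_le: "expectation (\<lambda>\<omega>. of_bool (X 0 \<omega> \<le> x)) = F x"
proof -
  have "expectation (\<lambda>\<omega>. of_bool (X 0 \<omega> \<le> x)) = expectation (indicator {\<omega> \<in> space M. X 0 \<omega> \<le> x})"
    by (intro Bochner_Integration.integral_cong) (auto simp: indicator_def)
  also have "\<dots> = F x" by (simp add: integral_indicator F_def Collect_conj_eq Int_commute)
  finally show ?thesis .
qed

lemma expectation_comp_X:
  fixes h :: "real \<Rightarrow> real"
  assumes [measurable]: "h \<in> borel_measurable borel"
  shows "expectation (\<lambda>\<omega>. h (X j \<omega>)) = expectation (\<lambda>\<omega>. h (X 0 \<omega>))"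
proof -
  have "expectation (\<lambda>\<omega>. h (X j \<omega>)) = integral\<^sup>L (distr M borel (X j)) h"
    using integral_distr[OF X_measurable[of j] assms] by simp
  also have "\<dots> = integral\<^sup>L (distr M borel (X 0)) h" by (simp add: ident[of j])
  also have "\<dots> = expectation (\<lambda>\<omega>. h (X 0 \<omega>))" using integral_distr[OF X_measurable[of 0] assms] by simp
  finally show ?thesis .
qed

lemma empirical_sum_deviation:
  fixes \<psi> :: "real \<Rightarrow> real"
  assumes [measurable]: "\<psi> \<in> borel_measurable borel" and \<psi>_bound: "\<And>x. \<bar>\<psi> x\<bar> \<le> 1"
    and N: "N \<ge> 1" and p: "p > 0" and second_moment: "expectation (\<lambda>\<omega>. (\<psi> (X 0 \<omega>))\<^sup>2) \<le> p"
    and \<epsilon>: "\<epsilon> > 0" "\<epsilon> \<le> 2 * real N * p"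
  shows "prob {\<omega> \<in> space M. \<epsilon> \<le> \<bar>(\<Sum>j<N. \<psi> (X j \<omega>)) - real N * expectation (\<lambda>\<omega>. \<psi> (X 0 \<omega>))\<bar>}
          \<le> 2 * exp (- \<epsilon>\<^sup>2 / (4 * real N * p))"
proof -
  define Z where "Z j \<omega> = \<psi> (X j \<omega>)" for j \<omega>
  have indep_Z: "indep_vars (\<lambda>_. borel) Z {..<N}"
    unfolding Z_def by (rule indep_vars_compose2[OF indep_vars_subset[OF indep]]) auto
  have "expectation (\<lambda>\<omega>. (Z j \<omega>)\<^sup>2) \<le> p" for j
    using second_moment expectation_comp_X[of "\<lambda>x. (\<psi> x)\<^sup>2" j] by (simp add: Z_def)
  then have "prob {\<omega> \<in> space M. \<epsilon> \<le> \<bar>(\<Sum>j<N. Z j \<omega>) - (\<Sum>j<N. expectation (Z j))\<bar>}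
          \<le> 2 * exp (- \<epsilon>\<^sup>2 / (4 * real (card {..<N}) * p))"
    using N p \<epsilon> \<psi>_bound by (intro sum_deviation_le[OF _ _ indep_Z]) (auto simp: Z_def lessThan_empty_iff)
  moreover have "expectation (Z j) = expectation (\<lambda>\<omega>. \<psi> (X 0 \<omega>))" for j
    unfolding Z_def by (rule expectation_comp_X) simp
  ultimately show ?thesis by (simp add: Z_def)
qed

lemma count_le_deviation:
  assumes "N \<ge> 1" and "\<epsilon> > 0" "\<epsilon> \<le> 2 * real N"
  shows "prob {\<omega> \<in> space M. \<epsilon> \<le> \<bar>real (count_le X N t \<omega>) - real N * F t\<bar>}
          \<le> 2 * exp (- \<epsilon>\<^sup>2 / (4 * real N))"
proof -
  have "expectation (\<lambda>\<omega>. (of_bool (X 0 \<omega> \<le> t))\<^sup>2) = F t"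
    using expectation_of_bool_le[of t] by (simp add: power2_eq_square flip: of_bool_conj)
  then have "expectation (\<lambda>\<omega>. (of_bool (X 0 \<omega> \<le> t))\<^sup>2) \<le> (1::real)"
    by (simp add: F_def)
  then have "prob {\<omega> \<in> space M. \<epsilon> \<le> \<bar>(\<Sum>j<N. of_bool (X j \<omega> \<le> t)) - real N * F t\<bar>}
          \<le> 2 * exp (- \<epsilon>\<^sup>2 / (4 * real N))"
    using empirical_sum_deviation[of "\<lambda>x. of_bool (x \<le> t)" N 1 \<epsilon>] assms
    by (simp add: expectation_of_bool_le)
  then show ?thesis by (simp only: real_count_le_eq_sum)
qed

lemma count_le_increment_deviation:
  assumes "N \<ge> 1" and p: "p > 0" "\<bar>F t - F s\<bar> \<le> p" and "\<epsilon> > 0" "\<epsilon> \<le> 2 * real N * p"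
  shows "prob {\<omega> \<in> space M.
            \<epsilon> \<le> \<bar>real (count_le X N t \<omega>) - real (count_le X N s \<omega>) - real N * (F t - F s)\<bar>}
          \<le> 2 * exp (- \<epsilon>\<^sup>2 / (4 * real N * p))"
proof -
  define \<psi> :: "real \<Rightarrow> real" where "\<psi> x = of_bool (x \<le> t) - of_bool (x \<le> s)" for x
  have [measurable]: "\<psi> \<in> borel_measurable borel" unfolding \<psi>_def by measurable
  have \<psi>_bound: "\<bar>\<psi> x\<bar> \<le> 1" for x unfolding \<psi>_def by simp
  have E\<psi>: "expectation (\<lambda>\<omega>. \<psi> (X 0 \<omega>)) = F t - F s"
    unfolding \<psi>_def by (simp add: integrable_of_bool_le expectation_of_bool_le)
  have "(\<psi> x)\<^sup>2 = sgn (t - s) * \<psi> x" for x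
    unfolding \<psi>_def by (auto simp: sgn_if)
  then have "expectation (\<lambda>\<omega>. (\<psi> (X 0 \<omega>))\<^sup>2) = sgn (t - s) * (F t - F s)"
    by (simp add: E\<psi>)
  also have "\<dots> \<le> p"
    using p F_mono[of s t] F_mono[of t s] by (cases s t rule: linorder_cases) auto
  finally have "expectation (\<lambda>\<omega>. (\<psi> (X 0 \<omega>))\<^sup>2) \<le> p" .
  then have "prob {\<omega> \<in> space M. \<epsilon> \<le> \<bar>(\<Sum>j<N. \<psi> (X j \<omega>)) - real N * (F t - F s)\<bar>}
          \<le> 2 * exp (- \<epsilon>\<^sup>2 / (4 * real N * p))"
    using empirical_sum_deviation[of \<psi> N p \<epsilon>] assms by (simp add: E\<psi> \<psi>_bound)
  moreover have "(\<Sum>j<N. \<psi> (X j \<omega>)) = real (count_le X N t \<omega>) - real (count_le X N s \<omega>)" for \<omega>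
    unfolding \<psi>_def real_count_le_eq_sum by (simp only: sum_subtractf)
  ultimately show ?thesis by (simp add: algebra_simps)
qed

lemma F_quantile:
  assumes \<alpha>: "0 < \<alpha>" "\<alpha> < 1" and cont: "isCont F (quantile F \<alpha>)"
  shows "F (quantile F \<alpha>) = \<alpha>"
proof -
  interpret D: real_distribution "distr M borel (X 0)" by simp
  have F_cdf: "F = cdf (distr M borel (X 0))"
    by (auto simp: fun_eq_iff F_def cdf_def measure_distr vimage_def Int_def conj_commute)
  define S where "S = {x. \<alpha> \<le> F x}"
  have "\<forall>\<^sub>F x in at_top. \<alpha> < F x"
    using order_tendstoD(1)[OF D.cdf_lim_at_top_prob] \<alpha> by (simp add: F_cdf)
  then have "S \<noteq> {}" by (auto simp: S_def eventually_at_top_linorder intro: less_imp_le)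
  have "\<forall>\<^sub>F x in at_bot. F x < \<alpha>"
    using order_tendstoD(2)[OF D.cdf_lim_at_bot] \<alpha> by (simp add: F_cdf)
  then obtain b where b: "\<And>x. x \<le> b \<Longrightarrow> F x < \<alpha>" by (auto simp: eventually_at_bot_linorder)
  have "bdd_below S"
  proof (rule bdd_belowI)
    fix x assume "x \<in> S"
    then show "b \<le> x" using b[of x] by (force simp: S_def)
  qed
  define \<xi> where "\<xi> = quantile F \<alpha>"
  have \<xi>: "\<xi> = Inf S" by (simp add: \<xi>_def quantile_def S_def)
  have below: "F x < \<alpha>" if "x < \<xi>" for x
    using cInf_lower[OF _ \<open>bdd_below S\<close>, of x] that \<xi> by (force simp: S_def)
  have above: "\<alpha> \<le> F x" if "\<xi> < x" for x
  proof -
    have "Inf S < x" using that \<xi> by simp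
    then obtain s where "s \<in> S" "s < x" using cInf_less_iff[OF \<open>S \<noteq> {}\<close> \<open>bdd_below S\<close>] by auto
    then show ?thesis using F_mono[of s x] by (simp add: S_def)
  qed
  have "(F \<longlongrightarrow> F \<xi>) (at_left \<xi>)" "(F \<longlongrightarrow> F \<xi>) (at_right \<xi>)"
    using cont by (simp_all add: \<xi>_def isCont_def filterlim_at_split)
  moreover have "\<forall>\<^sub>F x in at_left \<xi>. F x \<le> \<alpha>" "\<forall>\<^sub>F x in at_right \<xi>. \<alpha> \<le> F x"
    using below above by (auto simp: eventually_at_filter less_imp_le)
  ultimately have "F \<xi> \<le> \<alpha>" "\<alpha> \<le> F \<xi>"
    by (simp_all add: tendsto_upperbound tendsto_lowerbound)
  then show ?thesis by (simp add: \<xi>_def)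
qed

end

section \<open>Order statistics and the signed sum\<close>

lemma sorted_nth_le_iff:
  fixes ys :: "real list"
  assumes s: "sorted ys" and i: "i < length ys"
  shows "ys ! i \<le> t \<longleftrightarrow> i < card {j. j < length ys \<and> ys ! j \<le> t}"
proof
  assume h: "ys ! i \<le> t"
  have "{..i} \<subseteq> {j. j < length ys \<and> ys ! j \<le> t}"
    using h i s by (auto simp: sorted_iff_nth_mono intro: order_trans)
  from card_mono[OF _ this] show "i < card {j. j < length ys \<and> ys ! j \<le> t}" by simp
next
  assume h: "i < card {j. j < length ys \<and> ys ! j \<le> t}"
  show "ys ! i \<le> t"
  proof (rule ccontr)
    assume "\<not> ys ! i \<le> t"
    hence "{j. j < length ys \<and> ys ! j \<le> t} \<subseteq> {..<i}"
      using s i by (auto simp: sorted_iff_nth_mono not_less) (meson le_less_trans not_le sorted_nth_mono s)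
    from card_mono[OF _ this] h show False by simp
  qed
qed

lemma order_stat_le_iff:
  assumes "1 \<le> i" "i \<le> int N"
  shows "order_stat X N w i \<le> t \<longleftrightarrow> i \<le> int (count_le X N t w)"
proof -
  define xs where "xs = map (\<lambda>j. X j w) [0..<N]"
  define ys where "ys = sort xs"
  have len: "length ys = N" by (simp add: ys_def xs_def)
  have ii: "nat i - 1 < length ys" using assms len by linarith
  have "order_stat X N w i = ys ! (nat i - 1)" by (simp add: order_stat_def ys_def xs_def)
  moreover have "card {j. j < length ys \<and> ys ! j \<le> t} = length (filter (\<lambda>x. x \<le> t) ys)"
    by (simp add: length_filter_conv_card)
  moreover have "length (filter (\<lambda>x. x \<le> t) ys) = length (filter (\<lambda>x. x \<le> t) xs)"
    unfolding ys_def by (metis mset_filter mset_sort size_mset)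
  moreover have "length (filter (\<lambda>x. x \<le> t) xs) = count_le X N t w"
    by (simp add: xs_def length_filter_conv_card count_le_def cong: conj_cong)
  ultimately show ?thesis
    using sorted_nth_le_iff[OF _ ii, of t] assms by (simp add: ys_def) linarith
qed

lemma sum_int_offset_shift:
  "(\<Sum>i\<in>{a..a + int n}. real_of_int (i - a)) = real n * (real n + 1) / 2"
proof (induction n)
  case 0 then show ?case by simp
next
  case (Suc n)
  have "{a..a + int (Suc n)} = insert (a + int (Suc n)) {a..a + int n}" by auto
  then show ?case using Suc by (simp add: field_simps)
qed

lemma sum_int_offset:
  assumes "a \<le> b"
  shows "(\<Sum>i\<in>{a..b}. real_of_int (i - a)) = real_of_int (b - a) * (real_of_int (b - a) + 1) / 2"
  using sum_int_offset_shift[of a "nat (b - a)"] assms by simp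

lemma conv_sum_add: "conv_sum k m (\<lambda>i. a i + b i) = conv_sum k m a + conv_sum k m b"
  by (simp add: conv_sum_def sum.distrib algebra_simps)

lemma conv_sum_cmult: "conv_sum k m (\<lambda>i. c * a i) = c * conv_sum k m a"
  by (simp add: conv_sum_def sum_distrib_left algebra_simps)

lemma conv_sum_offset:
  "conv_sum k m (\<lambda>i. real_of_int (i - m)) = - (real_of_int \<bar>m - k\<bar> * (real_of_int \<bar>m - k\<bar> + 1) / 2)"
proof (cases "k \<le> m")
  case True
  have reflect: "(\<Sum>i\<in>{k..m}. real_of_int (m - i)) = (\<Sum>i\<in>{k..m}. real_of_int (i - k))"
    by (rule sum.reindex_bij_witness[of _ "\<lambda>i. k + m - i" "\<lambda>i. k + m - i"]) auto
  have "(\<Sum>i\<in>{k..m}. real_of_int (i - m)) = - (\<Sum>i\<in>{k..m}. real_of_int (m - i))"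
    by (simp add: sum_negf[symmetric])
  also have "\<dots> = - (real_of_int (m - k) * (real_of_int (m - k) + 1) / 2)"
    unfolding reflect sum_int_offset[OF True] ..
  finally have "(\<Sum>i\<in>{k..m}. real_of_int (i - m)) = \<dots>" .
  then show ?thesis using True by (cases "k = m") (simp_all add: conv_sum_def)
next
  case False
  then have "m \<le> k" by simp
  have "conv_sum k m (\<lambda>i. real_of_int (i - m)) = - (\<Sum>i\<in>{m..k}. real_of_int (i - m))"
    using False by (simp add: conv_sum_def)
  also have "\<dots> = - (real_of_int (k - m) * (real_of_int (k - m) + 1) / 2)"
    unfolding sum_int_offset[OF \<open>m \<le> k\<close>] ..
  finally show ?thesis using False by simp
qed

lemma abs_conv_sum_le:
  assumes "\<And>i. min k m \<le> i \<Longrightarrow> i \<le> max k m \<Longrightarrow> \<bar>e i\<bar> \<le> E"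
  shows "\<bar>conv_sum k m e\<bar> \<le> (real_of_int \<bar>m - k\<bar> + 1) * E"
proof -
  have "\<bar>conv_sum k m e\<bar> \<le> (\<Sum>i\<in>{min k m..max k m}. \<bar>e i\<bar>)"
    by (auto simp: conv_sum_def abs_mult sgn_if intro: order_trans[OF sum_abs])
  also have "\<dots> \<le> (\<Sum>i\<in>{min k m..max k m}. E)" using assms by (intro sum_mono) auto
  also have "\<dots> = (real_of_int \<bar>m - k\<bar> + 1) * E" by (auto simp: max_def min_def)
  finally show ?thesis .
qed

lemma conv_sum_linear_approx:
  assumes "\<And>i. min k m \<le> i \<Longrightarrow> i \<le> max k m \<Longrightarrow> \<bar>a i - c * real_of_int (i - m)\<bar> \<le> E"
  shows "\<bar>conv_sum k m a + c * real_of_int \<bar>m - k\<bar> * (real_of_int \<bar>m - k\<bar> + 1) / 2\<bar>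
          \<le> (real_of_int \<bar>m - k\<bar> + 1) * E"
proof -
  define e where "e i = a i - c * real_of_int (i - m)" for i
  have "conv_sum k m a = c * conv_sum k m (\<lambda>i. real_of_int (i - m)) + conv_sum k m e"
    unfolding e_def conv_sum_cmult[symmetric] conv_sum_add[symmetric] by simp
  then have "conv_sum k m a + c * real_of_int \<bar>m - k\<bar> * (real_of_int \<bar>m - k\<bar> + 1) / 2 = conv_sum k m e"
    unfolding conv_sum_offset by (simp add: algebra_simps)
  moreover have "\<bar>conv_sum k m e\<bar> \<le> (real_of_int \<bar>m - k\<bar> + 1) * E"
    by (rule abs_conv_sum_le) (use assms in \<open>simp add: e_def\<close>)
  ultimately show ?thesis by simp
qed

(* The counts at u - \<eta> and u + \<eta>, u the linear prediction, lie on either side of i. *)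
lemma order_stat_linear_approx:
  fixes cnt :: "real \<Rightarrow> nat" and os :: "int \<Rightarrow> real" and N :: nat
  assumes N: "N \<ge> 1"
    and os_iff: "\<And>i t. 1 \<le> i \<Longrightarrow> i \<le> int N \<Longrightarrow> (os i \<le> t \<longleftrightarrow> i \<le> int (cnt t))"
    and U: "\<And>t. \<bar>t - \<xi>\<bar> \<le> r \<Longrightarrow> \<bar>real (cnt t) - real (cnt \<xi>) - real N * (F t - \<alpha>)\<bar> \<le> D2"
    and TF: "\<And>t. \<bar>t - \<xi>\<bar> \<le> r \<Longrightarrow> \<bar>F t - \<alpha> - f0 * (t - \<xi>)\<bar> \<le> Lf * (t - \<xi>)\<^sup>2"
    and f0: "f0 > 0" and Lf: "Lf \<ge> 0" and D2: "D2 \<ge> 0"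
    and i: "1 \<le> i" "i \<le> int N"
    and rng: "\<bar>real_of_int (i - int (cnt \<xi>))\<bar> / (real N * f0) + \<eta> \<le> r"
    and eta: "\<eta> = (Lf * r\<^sup>2 + (D2 + 1) / real N) / f0"
  shows "\<bar>os i - (\<xi> + real_of_int (i - int (cnt \<xi>)) / (real N * f0))\<bar> \<le> \<eta>"
proof -
  define u where "u = \<xi> + real_of_int (i - int (cnt \<xi>)) / (real N * f0)"
  have Npos: "real N > 0" using N by simp
  have eta0: "\<eta> \<ge> 0" using eta f0 Lf D2 Npos by (simp add: divide_nonneg_pos)
  have key: "real N * f0 * \<eta> = real N * Lf * r\<^sup>2 + D2 + 1"
    using eta f0 Npos by (simp add: field_simps)
  have ku: "real N * f0 * (u - \<xi>) = real_of_int (i - int (cnt \<xi>))"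
    using f0 Npos by (simp add: u_def field_simps)
  have absu: "\<bar>u - \<xi>\<bar> = \<bar>real_of_int (i - int (cnt \<xi>))\<bar> / (real N * f0)"
    using f0 Npos by (simp add: u_def abs_divide abs_mult)
  have sq: "(t - \<xi>)\<^sup>2 \<le> r\<^sup>2" if "\<bar>t - \<xi>\<bar> \<le> r" for t
    using that by (simp add: abs_le_square_iff[symmetric])
  define tp where "tp = u + \<eta>"
  have tpr: "\<bar>tp - \<xi>\<bar> \<le> r" using rng absu eta0 unfolding tp_def by (smt (verit))
  have "F tp - \<alpha> \<ge> f0 * (tp - \<xi>) - Lf * r\<^sup>2"
    using TF[OF tpr] sq[OF tpr] Lf mult_left_mono[OF sq[OF tpr] Lf] by linarith
  hence "real N * (F tp - \<alpha>) \<ge> real N * (f0 * (tp - \<xi>) - Lf * r\<^sup>2)"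
    using Npos by (intro mult_left_mono) auto
  moreover have "real N * (f0 * (tp - \<xi>) - Lf * r\<^sup>2) = real_of_int (i - int (cnt \<xi>)) + D2 + 1"
    using key ku unfolding tp_def by (simp add: algebra_simps)
  ultimately have "real (cnt tp) \<ge> real_of_int i + 1"
    using U[OF tpr] by linarith
  hence up: "os i \<le> tp" using os_iff[OF i] by simp
  define tm where "tm = u - \<eta>"
  have tmr: "\<bar>tm - \<xi>\<bar> \<le> r" using rng absu eta0 unfolding tm_def by (smt (verit))
  have "F tm - \<alpha> \<le> f0 * (tm - \<xi>) + Lf * r\<^sup>2"
    using TF[OF tmr] sq[OF tmr] Lf mult_left_mono[OF sq[OF tmr] Lf] by linarith
  hence "real N * (F tm - \<alpha>) \<le> real N * (f0 * (tm - \<xi>) + Lf * r\<^sup>2)"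
    using Npos by (intro mult_left_mono) auto
  moreover have "real N * (f0 * (tm - \<xi>) + Lf * r\<^sup>2) = real_of_int (i - int (cnt \<xi>)) - D2 - 1"
    using key ku unfolding tm_def by (simp add: algebra_simps)
  ultimately have "real (cnt tm) \<le> real_of_int i - 1"
    using U[OF tmr] by linarith
  hence lo: "\<not> os i \<le> tm" using os_iff[OF i] by simp
  show ?thesis using up lo unfolding tp_def tm_def u_def by linarith
qed

lemma conv_sum_order_stat_expansion:
  fixes cnt :: "real \<Rightarrow> nat" and os :: "int \<Rightarrow> real" and N :: nat and k :: int
  assumes N: "N \<ge> 1"
    and os_iff: "\<And>i t. 1 \<le> i \<Longrightarrow> i \<le> int N \<Longrightarrow> (os i \<le> t \<longleftrightarrow> i \<le> int (cnt t))"
    and U: "\<And>t. \<bar>t - \<xi>\<bar> \<le> r \<Longrightarrow> \<bar>real (cnt t) - real (cnt \<xi>) - real N * (F t - \<alpha>)\<bar> \<le> D2"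
    and TF: "\<And>t. \<bar>t - \<xi>\<bar> \<le> r \<Longrightarrow> \<bar>F t - \<alpha> - f0 * (t - \<xi>)\<bar> \<le> Lf * (t - \<xi>)\<^sup>2"
    and TG: "\<And>t. \<bar>t - \<xi>\<bar> \<le> r \<Longrightarrow> \<bar>G t - G \<xi> - g0 * (t - \<xi>)\<bar> \<le> Lg * (t - \<xi>)\<^sup>2"
    and f0: "f0 > 0" and Lf: "Lf \<ge> 0" and Lg: "Lg \<ge> 0" and D2: "D2 \<ge> 0"
    and k: "1 \<le> k" "k \<le> int N" and m: "1 \<le> cnt \<xi>" "cnt \<xi> \<le> N"
    and rng: "\<bar>real_of_int (k - int (cnt \<xi>))\<bar> / (real N * f0) + \<eta> \<le> r"
    and eta: "\<eta> = (Lf * r\<^sup>2 + (D2 + 1) / real N) / f0"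
  shows "\<bar>conv_sum k (int (cnt \<xi>)) (\<lambda>i. G (os i) - G \<xi>)
           + g0 / (real N * f0) * real_of_int \<bar>int (cnt \<xi>) - k\<bar> * (real_of_int \<bar>int (cnt \<xi>) - k\<bar> + 1) / 2\<bar>
         \<le> (real_of_int \<bar>int (cnt \<xi>) - k\<bar> + 1) * (\<bar>g0\<bar> * \<eta> + Lg * r\<^sup>2)"
proof -
  define c where "c = g0 / (real N * f0)"
  define m where "m = int (cnt \<xi>)"
  define e where "e i = G (os i) - G \<xi> - c * real_of_int (i - m)" for i
  have Npos: "real N > 0" using N by simp
  have eb: "\<bar>e i\<bar> \<le> \<bar>g0\<bar> * \<eta> + Lg * r\<^sup>2" if i: "min k m \<le> i" "i \<le> max k m" for i
  proof -
    have i1: "1 \<le> i" "i \<le> int N" using i k m by (auto simp: m_def)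
    have "\<bar>real_of_int (i - m)\<bar> \<le> \<bar>real_of_int (k - m)\<bar>" using i by linarith
    hence "\<bar>real_of_int (i - m)\<bar> / (real N * f0) \<le> \<bar>real_of_int (k - m)\<bar> / (real N * f0)"
      using Npos f0 by (intro divide_right_mono) auto
    hence rng_i: "\<bar>real_of_int (i - int (cnt \<xi>))\<bar> / (real N * f0) + \<eta> \<le> r" using rng by (simp add: m_def)
    define u where "u = \<xi> + real_of_int (i - m) / (real N * f0)"
    have ap: "\<bar>os i - u\<bar> \<le> \<eta>"
      using order_stat_linear_approx[OF N os_iff U TF f0 Lf D2 i1 rng_i eta] by (simp add: u_def m_def)
    have absu: "\<bar>u - \<xi>\<bar> = \<bar>real_of_int (i - m)\<bar> / (real N * f0)"
      using f0 Npos by (simp add: u_def abs_divide abs_mult)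
    have xr: "\<bar>os i - \<xi>\<bar> \<le> r" using ap absu rng_i by (smt (verit) m_def)
    have sq: "(os i - \<xi>)\<^sup>2 \<le> r\<^sup>2" using xr by (simp add: abs_le_square_iff[symmetric])
    have tg: "\<bar>G (os i) - G \<xi> - g0 * (os i - \<xi>)\<bar> \<le> Lg * r\<^sup>2"
      using TG[OF xr] mult_left_mono[OF sq Lg] by linarith
    have cu: "c * real_of_int (i - m) = g0 * (u - \<xi>)" by (simp add: c_def u_def)
    have "e i = (G (os i) - G \<xi> - g0 * (os i - \<xi>)) + g0 * (os i - u)"
      unfolding e_def cu by (simp add: algebra_simps)
    moreover have "\<bar>g0 * (os i - u)\<bar> \<le> \<bar>g0\<bar> * \<eta>" using ap by (simp add: abs_mult mult_left_mono)
    ultimately show ?thesis using tg by linarith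
  qed
  have "\<bar>conv_sum k m (\<lambda>i. G (os i) - G \<xi>) + c * real_of_int \<bar>m - k\<bar> * (real_of_int \<bar>m - k\<bar> + 1) / 2\<bar>
         \<le> (real_of_int \<bar>m - k\<bar> + 1) * (\<bar>g0\<bar> * \<eta> + Lg * r\<^sup>2)"
    by (rule conv_sum_linear_approx) (use eb in \<open>simp add: e_def\<close>)
  then show ?thesis by (simp add: c_def m_def)
qed

lemma grid_offset_le:
  fixes N :: nat
  assumes "0 \<le> r" "\<bar>i\<bar> \<le> int N"
  shows "\<bar>real_of_int i * r / real N\<bar> \<le> r"
proof (cases "N = 0")
  case False
  have "\<bar>real_of_int i\<bar> * r \<le> real N * r" using assms by (intro mult_right_mono) linarith+
  then show ?thesis using False assms(1) by (simp add: abs_mult divide_le_eq mult.commute)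
qed (simp add: assms)

lemma grid_cell_exists:
  fixes N :: nat
  assumes N: "N \<ge> 1" and r: "0 < r" and t: "\<bar>t - \<xi>\<bar> \<le> r"
  obtains j :: int where "- int N \<le> j" "j + 1 \<le> int N"
    "\<xi> + real_of_int j * r / real N \<le> t" "t \<le> \<xi> + real_of_int (j + 1) * r / real N"
proof -
  define y where "y = (t - \<xi>) * real N / r"
  have t_eq: "t = \<xi> + y * r / real N" using N r by (simp add: y_def)
  have "\<bar>t - \<xi>\<bar> * real N \<le> r * real N" using t by (rule mult_right_mono) simp
  then have "\<bar>y\<bar> \<le> real N" using r by (simp add: y_def abs_mult divide_le_eq mult.commute)
  then have y: "- real N \<le> y" "y \<le> real N" by linarith+
  define j where "j = min \<lfloor>y\<rfloor> (int N - 1)"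
  have "real_of_int j \<le> y" "y \<le> real_of_int (j + 1)"
    using y by (auto simp: j_def min_def) linarith+
  moreover have "- int N \<le> j" using y N by (simp add: j_def le_floor_iff)
  ultimately show ?thesis
    using N r by (intro that[of j]) (auto simp: j_def t_eq divide_right_mono mult_right_mono)
qed

lemma deviation_between:
  fixes cnt :: "real \<Rightarrow> nat"
  assumes mono: "\<And>s t. s \<le> t \<Longrightarrow> cnt s \<le> cnt t" and order: "s \<le> t" "t \<le> u"
    and dev: "\<bar>real (cnt s) - c - N * (F s - \<alpha>)\<bar> \<le> D" "\<bar>real (cnt u) - c - N * (F u - \<alpha>)\<bar> \<le> D"
    and incr: "N * (F t - F s) \<le> E" "N * (F u - F t) \<le> E"
  shows "\<bar>real (cnt t) - c - N * (F t - \<alpha>)\<bar> \<le> D + E"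
  using mono[OF order(1)] mono[OF order(2)] dev incr by (simp add: abs_le_iff algebra_simps)

lemma deviation_from_grid:
  fixes cnt :: "real \<Rightarrow> nat" and N :: nat
  assumes N: "N \<ge> 1" and r: "r > 0"
    and mono: "\<And>s t. s \<le> t \<Longrightarrow> cnt s \<le> cnt t"
    and F_incr: "\<And>s t. \<bar>s - \<xi>\<bar> \<le> r \<Longrightarrow> \<bar>t - \<xi>\<bar> \<le> r \<Longrightarrow> s \<le> t \<Longrightarrow> F t - F s \<le> Mf * (t - s)"
    and grid: "\<And>j. -int N \<le> j \<Longrightarrow> j \<le> int N \<Longrightarrow>
        \<bar>real (cnt (\<xi> + real_of_int j * r / real N)) - real (cnt \<xi>) - real N * (F (\<xi> + real_of_int j * r / real N) - \<alpha>)\<bar> \<le> D"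
    and t: "\<bar>t - \<xi>\<bar> \<le> r" and Mf: "Mf \<ge> 0"
  shows "\<bar>real (cnt t) - real (cnt \<xi>) - real N * (F t - \<alpha>)\<bar> \<le> D + Mf * r"
proof -
  obtain j where j: "- int N \<le> j" "j + 1 \<le> int N"
    and cell: "\<xi> + real_of_int j * r / real N \<le> t" "t \<le> \<xi> + real_of_int (j + 1) * r / real N"
    using grid_cell_exists[OF N r t] .
  define s u where "s = \<xi> + real_of_int j * r / real N" and "u = \<xi> + real_of_int (j + 1) * r / real N"
  have near: "\<bar>s - \<xi>\<bar> \<le> r" "\<bar>u - \<xi>\<bar> \<le> r"
    using grid_offset_le[of r j N] grid_offset_le[of r "j + 1" N] j r by (simp_all add: s_def u_def)
  have order: "s \<le> t" "t \<le> u" using cell by (simp_all add: s_def u_def)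
  have "u - s = r / real N" by (simp add: s_def u_def add_divide_distrib algebra_simps)
  then have "t - s \<le> r / real N" "u - t \<le> r / real N" using order by linarith+
  then have "real N * (t - s) \<le> r" "real N * (u - t) \<le> r"
    using mult_left_mono[of _ "r / real N" "real N"] N by simp_all
  moreover have "F t - F s \<le> Mf * (t - s)" "F u - F t \<le> Mf * (u - t)"
    using F_incr near t order by simp_all
  ultimately have "real N * (F t - F s) \<le> Mf * r" "real N * (F u - F t) \<le> Mf * r"
    using mult_left_mono[of _ _ "real N"] mult_left_mono[of _ r Mf] Mf
    by (smt (verit, best) mult.left_commute of_nat_0_le_iff)+
  then show ?thesis
    using deviation_between[OF mono order, where c="real (cnt \<xi>)" and N="real N" and D=D] grid[OF j(1)] grid[of "j + 1"] j
    by (simp add: s_def u_def)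
qed

section \<open>Bookkeeping of the error terms\<close>

lemma local_error_le:
  fixes n q K A1 Mf Lf r D2 :: real
  assumes n: "1 \<le> n" and q: "0 < q" "q \<le> 1" "1 / n \<le> q ^ 4"
    and nonneg: "0 \<le> K" "0 \<le> A1" "0 \<le> Mf" "0 \<le> Lf"
    and r: "r = K * q\<^sup>2" and D2: "D2 = A1 * n * q ^ 3 + Mf * r"
  shows "Lf * r\<^sup>2 + (D2 + 1) / n \<le> (Lf * K\<^sup>2 + A1 + Mf * K + 1) * q ^ 3"
proof -
  have q_powers: "q ^ 4 \<le> q ^ 3" "q ^ 6 \<le> q ^ 3" using q by (simp_all add: power_decreasing)
  have "Lf * r\<^sup>2 = Lf * K\<^sup>2 * q ^ 4" by (simp add: r power_mult_distrib flip: power_mult)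
  also have "\<dots> \<le> Lf * K\<^sup>2 * q ^ 3" using q_powers nonneg by (intro mult_left_mono) auto
  finally have "Lf * r\<^sup>2 \<le> Lf * K\<^sup>2 * q ^ 3" .
  moreover have "(D2 + 1) / n = A1 * q ^ 3 + Mf * K * (q\<^sup>2 * (1 / n)) + 1 / n"
    using n by (simp add: D2 r field_simps)
  moreover have "q\<^sup>2 * (1 / n) \<le> q ^ 3"
  proof -
    have "q\<^sup>2 * (1 / n) \<le> q\<^sup>2 * q ^ 4" using q by (intro mult_left_mono) auto
    then show ?thesis using q_powers by (simp flip: power_add)
  qed
  then have "Mf * K * (q\<^sup>2 * (1 / n)) \<le> Mf * K * q ^ 3" using nonneg by (intro mult_left_mono) auto
  ultimately show ?thesis using q q_powers by (simp add: algebra_simps)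
qed

lemma quadratic_offset_le:
  fixes n q B Ck a b :: real
  assumes n: "1 \<le> n" and q: "0 < q" "q \<le> 1" "1 / n \<le> q ^ 4" and nonneg: "0 \<le> B" "0 \<le> Ck"
    and a: "\<bar>a\<bar> \<le> B * n * q\<^sup>2" and b: "\<bar>b\<bar> \<le> Ck"
  shows "\<bar>a\<^sup>2 - \<bar>a - b\<bar>\<^sup>2 - \<bar>a - b\<bar>\<bar> / n\<^sup>2 \<le> (2 * B * Ck + B + Ck\<^sup>2 + Ck) * q ^ 5"
proof -
  define d where "d = \<bar>a - b\<bar>"
  have "a\<^sup>2 - d\<^sup>2 = 2 * a * b - b\<^sup>2" by (simp add: d_def power2_eq_square algebra_simps)
  then have "\<bar>a\<^sup>2 - d\<^sup>2\<bar> \<le> 2 * \<bar>a\<bar> * \<bar>b\<bar> + \<bar>b\<bar>\<^sup>2"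
    using abs_triangle_ineq4[of "2 * a * b" "b\<^sup>2"] by (simp add: abs_mult)
  also have "\<dots> \<le> 2 * \<bar>a\<bar> * Ck + Ck\<^sup>2" using b by (intro add_mono mult_left_mono power_mono) auto
  finally have "\<bar>a\<^sup>2 - d\<^sup>2 - d\<bar> \<le> 2 * \<bar>a\<bar> * Ck + Ck\<^sup>2 + \<bar>a\<bar> + Ck"
    using b by (simp add: d_def)
  also have "\<dots> \<le> (2 * B * Ck + B) * n * q\<^sup>2 + (Ck\<^sup>2 + Ck)"
    using mult_right_mono[OF a, of Ck] a nonneg by (simp add: algebra_simps)
  finally have "\<bar>a\<^sup>2 - d\<^sup>2 - d\<bar> / n\<^sup>2 \<le> ((2 * B * Ck + B) * n * q\<^sup>2 + (Ck\<^sup>2 + Ck)) / n\<^sup>2"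
    using n by (simp add: divide_right_mono)
  also have "\<dots> = (2 * B * Ck + B) * (q\<^sup>2 * (1 / n)) + (Ck\<^sup>2 + Ck) * (1 / n)\<^sup>2"
    using n by (simp add: field_simps power2_eq_square)
  also have "\<dots> \<le> (2 * B * Ck + B) * (q\<^sup>2 * q ^ 4) + (Ck\<^sup>2 + Ck) * (q ^ 4)\<^sup>2"
    using q n nonneg by (intro add_mono mult_left_mono power_mono) auto
  also have "\<dots> \<le> (2 * B * Ck + B) * q ^ 5 + (Ck\<^sup>2 + Ck) * q ^ 5"
    using q nonneg by (intro add_mono mult_left_mono) (simp_all add: power_decreasing flip: power_add power_mult)
  finally show ?thesis by (simp add: d_def algebra_simps)
qed

lemma radius_arith_bound:
  fixes n q B Ck K A1 Mf Lf f0 a b r \<eta> D2 :: real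
  assumes n: "n \<ge> 1" and q: "0 < q" "q \<le> 1" and nq: "1 / n \<le> q ^ 4"
    and pos: "B \<ge> 0" "Ck \<ge> 0" "A1 \<ge> 0" "Mf \<ge> 0" "Lf \<ge> 0" "f0 > 0"
    and K: "K = (B + 1) / f0"
    and a: "\<bar>a\<bar> \<le> B * n * q\<^sup>2" and b: "\<bar>b\<bar> \<le> Ck"
    and small: "q * (A1 + (Ck + Lf * K\<^sup>2 + Mf * K + 1)) \<le> 1"
    and r: "r = K * q\<^sup>2" and eta: "\<eta> = (Lf * r\<^sup>2 + (D2 + 1) / n) / f0" and D2: "D2 = A1 * n * q ^ 3 + Mf * r"
  shows "\<bar>a - b\<bar> / (n * f0) + \<eta> \<le> r"
proof -
  have "\<bar>a - b\<bar> / n \<le> (B * n * q\<^sup>2 + Ck) / n" using a b n by (intro divide_right_mono) auto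
  also have "\<dots> = B * q\<^sup>2 + Ck * (1 / n)" using n by (simp add: field_simps)
  also have "\<dots> \<le> B * q\<^sup>2 + Ck * q ^ 3"
    using nq pos power_decreasing[of 3 4 q] q by (intro add_mono mult_left_mono) auto
  finally have "\<bar>a - b\<bar> / n + (Lf * r\<^sup>2 + (D2 + 1) / n) \<le> B * q\<^sup>2 + q\<^sup>2 * (q * (A1 + (Ck + Lf * K\<^sup>2 + Mf * K + 1)))"
    using local_error_le[OF n q nq _ pos(3-5) r D2] pos K by (simp add: algebra_simps power_numeral_reduce)
  also have "\<dots> \<le> B * q\<^sup>2 + q\<^sup>2" using small mult_left_mono[OF small, of "q\<^sup>2"] by simp
  also have "\<dots> = f0 * r" using pos by (simp add: r K field_simps)
  finally show ?thesis using pos n by (simp add: eta field_simps)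
qed

lemma remainder_arith_bound:
  fixes n q B Ck K A1 Mf Lf Lg f0 g0 a b CS r \<eta> D2 :: real
  assumes n: "n \<ge> 1" and q: "0 < q" "q \<le> 1" and nq: "1 / n \<le> q ^ 4"
    and pos: "B \<ge> 0" "Ck \<ge> 0" "K \<ge> 0" "A1 \<ge> 0" "Mf \<ge> 0" "Lf \<ge> 0" "Lg \<ge> 0" "f0 > 0"
    and a: "\<bar>a\<bar> \<le> B * n * q\<^sup>2" and b: "\<bar>b\<bar> \<le> Ck"
    and det: "\<bar>CS + g0 / (n * f0) * \<bar>a - b\<bar> * (\<bar>a - b\<bar> + 1) / 2\<bar> \<le> (\<bar>a - b\<bar> + 1) * (\<bar>g0\<bar> * \<eta> + Lg * r\<^sup>2)"
    and r: "r = K * q\<^sup>2" and eta: "\<eta> = (Lf * r\<^sup>2 + (D2 + 1) / n) / f0" and D2: "D2 = A1 * n * q ^ 3 + Mf * r"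
  shows "\<bar>CS / n - (- a\<^sup>2 / (2 * n\<^sup>2) * (g0 / f0))\<bar>
     \<le> ((B + Ck + 1) * (\<bar>g0\<bar> * (Lf * K\<^sup>2 + A1 + Mf * K + 1) / f0 + Lg * K\<^sup>2)
         + \<bar>g0\<bar> / (2 * f0) * (2 * B * Ck + Ck\<^sup>2 + B + Ck) + 1) * q ^ 5"
proof -
  define d where "d = \<bar>a - b\<bar>"
  define P where "P = \<bar>g0\<bar> * (Lf * K\<^sup>2 + A1 + Mf * K + 1) / f0 + Lg * K\<^sup>2"
  define X where "X = CS + g0 / (n * f0) * d * (d + 1) / 2"
  have n_pos: "n > 0" using n by simp
  have q_powers: "q ^ 4 \<le> q ^ 3" "q ^ 3 \<le> q\<^sup>2" using q by (simp_all add: power_decreasing)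
  have split: "CS / n - (- a\<^sup>2 / (2 * n\<^sup>2) * (g0 / f0)) = X / n + (g0 / f0) / (2 * n\<^sup>2) * (a\<^sup>2 - d\<^sup>2 - d)"
    using n_pos pos by (simp add: X_def d_def field_simps power2_eq_square)
  have "\<eta> \<le> (Lf * K\<^sup>2 + A1 + Mf * K + 1) * q ^ 3 / f0"
    using local_error_le[OF n q nq pos(3-6) r D2] pos by (simp add: eta divide_right_mono)
  moreover have "Lg * r\<^sup>2 \<le> Lg * K\<^sup>2 * q ^ 3"
    using q_powers pos mult_left_mono[of "q ^ 4" "q ^ 3" "Lg * K\<^sup>2"]
    by (simp add: r power_mult_distrib flip: power_mult)
  moreover have "\<bar>g0\<bar> * \<eta> \<le> \<bar>g0\<bar> * ((Lf * K\<^sup>2 + A1 + Mf * K + 1) * q ^ 3 / f0)"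
    using calculation(1) by (intro mult_left_mono) auto
  ultimately have error: "\<bar>g0\<bar> * \<eta> + Lg * r\<^sup>2 \<le> P * q ^ 3" by (simp add: P_def algebra_simps)
  have "0 \<le> \<eta>" using pos n_pos q unfolding eta r D2 by (intro divide_nonneg_pos add_nonneg_nonneg mult_nonneg_nonneg) auto
  then have error_nonneg: "0 \<le> \<bar>g0\<bar> * \<eta> + Lg * r\<^sup>2" using pos by simp
  have "(d + 1) / n \<le> (B * n * q\<^sup>2 + Ck + 1) / n" using a b n_pos by (intro divide_right_mono) (auto simp: d_def)
  also have "\<dots> = B * q\<^sup>2 + (Ck + 1) * (1 / n)" using n_pos by (simp add: field_simps)
  also have "\<dots> \<le> B * q\<^sup>2 + (Ck + 1) * q\<^sup>2"
    using nq pos q_powers by (intro add_mono mult_left_mono) auto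
  finally have "(d + 1) / n \<le> (B + Ck + 1) * q\<^sup>2" by (simp add: algebra_simps)
  then have "(d + 1) / n * (\<bar>g0\<bar> * \<eta> + Lg * r\<^sup>2) \<le> ((B + Ck + 1) * q\<^sup>2) * (P * q ^ 3)"
    using error error_nonneg pos by (intro mult_mono) (auto simp: d_def)
  moreover have "\<bar>X / n\<bar> \<le> (d + 1) / n * (\<bar>g0\<bar> * \<eta> + Lg * r\<^sup>2)"
    using det n_pos by (simp add: X_def d_def abs_divide divide_right_mono)
  ultimately have "\<bar>X / n\<bar> \<le> ((B + Ck + 1) * q\<^sup>2) * (P * q ^ 3)" by linarith
  also have "\<dots> = (B + Ck + 1) * P * q ^ 5" by (simp add: power_add[symmetric] algebra_simps)
  finally have linear: "\<bar>X / n\<bar> \<le> (B + Ck + 1) * P * q ^ 5" .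
  have "\<bar>(g0 / f0) / (2 * n\<^sup>2) * (a\<^sup>2 - d\<^sup>2 - d)\<bar> = \<bar>g0\<bar> / (2 * f0) * (\<bar>a\<^sup>2 - d\<^sup>2 - d\<bar> / n\<^sup>2)"
    using pos n_pos by (simp add: abs_mult abs_divide)
  also have "\<dots> \<le> \<bar>g0\<bar> / (2 * f0) * ((2 * B * Ck + B + Ck\<^sup>2 + Ck) * q ^ 5)"
    using quadratic_offset_le[OF n q nq pos(1,2) a b] pos by (intro mult_left_mono) (simp_all add: d_def)
  finally have quadratic: "\<bar>(g0 / f0) / (2 * n\<^sup>2) * (a\<^sup>2 - d\<^sup>2 - d)\<bar>
      \<le> \<bar>g0\<bar> / (2 * f0) * (2 * B * Ck + Ck\<^sup>2 + B + Ck) * q ^ 5" by (simp add: algebra_simps)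
  have "\<bar>CS / n - (- a\<^sup>2 / (2 * n\<^sup>2) * (g0 / f0))\<bar> \<le> \<bar>X / n\<bar> + \<bar>(g0 / f0) / (2 * n\<^sup>2) * (a\<^sup>2 - d\<^sup>2 - d)\<bar>"
    unfolding split by (rule abs_triangle_ineq)
  also have "\<dots> \<le> (B + Ck + 1) * P * q ^ 5 + \<bar>g0\<bar> / (2 * f0) * (2 * B * Ck + Ck\<^sup>2 + B + Ck) * q ^ 5 + q ^ 5"
    using linear quadratic zero_le_power[of q 5] q by linarith
  finally show ?thesis by (simp add: P_def algebra_simps)
qed

lemma exp_neg_mult_ln_le:
  fixes n :: real
  assumes "1 \<le> n" "c \<le> a"
  shows "exp (- (a * ln n)) \<le> n powr (- c)"
  using assms by (simp add: powr_def mult_right_mono)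

lemma log_rate_powers:
  fixes n :: real
  assumes "3 \<le> n"
  defines "q \<equiv> (ln n / n) powr (1/4)"
  shows "0 < q" "n * q ^ 4 = ln n" "1 / n \<le> q ^ 4" "q ^ 5 = (ln n / n) powr (5/4)"
proof -
  have "exp 1 \<le> n" using exp_le assms by linarith
  then have ln: "1 \<le> ln n" using assms by (simp add: ln_ge_iff)
  then have pos: "0 < ln n / n" using assms by simp
  show "0 < q" using pos ln assms by (simp add: q_def)
  have "q ^ 4 = q powr real 4" "q ^ 5 = q powr real 5" using \<open>0 < q\<close> by (simp_all add: powr_realpow)
  then have q4: "q ^ 4 = ln n / n" and q5: "q ^ 5 = (ln n / n) powr (5/4)"
    using pos ln assms by (simp_all add: q_def powr_powr)
  show "n * q ^ 4 = ln n" unfolding q4 using assms by simp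
  show "1 / n \<le> q ^ 4" unfolding q4 using ln assms by (simp add: divide_right_mono)
  show "q ^ 5 = (ln n / n) powr (5/4)" by (fact q5)
qed

lemma log_rate_eventually_small:
  assumes "0 < Y"
  shows "\<forall>\<^sub>F N in sequentially. (ln (real N) / real N) powr (1/4) * Z < Y"
proof -
  have "((\<lambda>N. ln (real N) / real N) \<longlongrightarrow> 0) sequentially"
    by (rule filterlim_compose[OF ln_x_over_x_tendsto_0 filterlim_real_sequentially])
  then have "((\<lambda>N. (ln (real N) / real N) powr (1/4) * Z) \<longlongrightarrow> 0 powr (1/4) * Z) sequentially"
    by (intro tendsto_mult tendsto_const tendsto_powr') (auto intro: eventually_sequentiallyI[of 1])
  then show ?thesis using assms by (intro order_tendstoD(2)) auto
qed

lemma eventually_le_mult_real_sequentially: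
  fixes a T :: real
  assumes "0 < a"
  shows "\<forall>\<^sub>F N in sequentially. T \<le> a * real N"
proof -
  have "\<forall>\<^sub>F N in sequentially. T / a \<le> real N"
    using filterlim_real_sequentially by (simp add: filterlim_at_top)
  then show ?thesis by (rule eventually_mono) (use assms in \<open>simp add: divide_le_eq mult.commute\<close>)
qed

lemma four_mult_le_sq_two_sqrt_plus_one: "0 \<le> x \<Longrightarrow> 4 * x \<le> (2 * sqrt x + 1)\<^sup>2"
  by (simp add: power2_sum power_mult_distrib)

section \<open>The remainder term\<close>

(* R_N of the theorem; c stands for g(\<xi>) / f(\<xi>). *)
definition bahadur_remainder ::
    "(nat \<Rightarrow> 'a \<Rightarrow> real) \<Rightarrow> (real \<Rightarrow> real) \<Rightarrow> real \<Rightarrow> real \<Rightarrow> real \<Rightarrow> int \<Rightarrow> nat \<Rightarrow> 'a \<Rightarrow> real" where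
  "bahadur_remainder X G \<xi> \<alpha> c k N \<omega> =
     (let Na = count_le X N \<xi> \<omega> in
      conv_sum k (int Na) (\<lambda>i. G (order_stat X N \<omega> i) - G \<xi>) / real N
      - (- (real Na - \<alpha> * real N)\<^sup>2 / (2 * (real N)\<^sup>2) * c))"

locale bahadur_setting = iid_sample M X F for M :: "'a measure" and X F +
  fixes G :: "real \<Rightarrow> real" and \<alpha> \<xi> \<delta> f0 g0 Lf Lg Mf :: real
  assumes \<alpha>: "0 < \<alpha>" "\<alpha> < 1"
    and F_\<xi>: "F \<xi> = \<alpha>"
    and \<delta>: "0 < \<delta>" and f0: "0 < f0" and Lf: "0 \<le> Lf" and Lg: "0 \<le> Lg" and Mf: "0 < Mf"
    and F_expansion: "\<And>t. \<bar>t - \<xi>\<bar> < \<delta> \<Longrightarrow> \<bar>F t - \<alpha> - f0 * (t - \<xi>)\<bar> \<le> Lf * (t - \<xi>)\<^sup>2"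
    and G_expansion: "\<And>t. \<bar>t - \<xi>\<bar> < \<delta> \<Longrightarrow> \<bar>G t - G \<xi> - g0 * (t - \<xi>)\<bar> \<le> Lg * (t - \<xi>)\<^sup>2"
    and F_lipschitz: "\<And>s t. \<bar>s - \<xi>\<bar> < \<delta> \<Longrightarrow> \<bar>t - \<xi>\<bar> < \<delta> \<Longrightarrow> \<bar>F t - F s\<bar> \<le> Mf * \<bar>t - s\<bar>"
begin

definition grid_point :: "nat \<Rightarrow> real \<Rightarrow> int \<Rightarrow> real" where
  "grid_point N r j = \<xi> + real_of_int j * r / real N"

lemma grid_point_near: "0 \<le> r \<Longrightarrow> \<bar>j\<bar> \<le> int N \<Longrightarrow> \<bar>grid_point N r j - \<xi>\<bar> \<le> r"
  using grid_offset_le[of r j N] by (simp add: grid_point_def)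

definition bad_event :: "nat \<Rightarrow> real \<Rightarrow> real \<Rightarrow> real \<Rightarrow> 'a set" where
  "bad_event N \<beta> r D =
     {\<omega> \<in> space M. \<beta> \<le> \<bar>real (count_le X N \<xi> \<omega>) - real N * \<alpha>\<bar>} \<union>
     (\<Union>j\<in>{- int N..int N}. {\<omega> \<in> space M. D \<le> \<bar>real (count_le X N (grid_point N r j) \<omega>)
        - real (count_le X N \<xi> \<omega>) - real N * (F (grid_point N r j) - \<alpha>)\<bar>})"

lemma bad_event_sets: "bad_event N \<beta> r D \<in> sets M"
  unfolding bad_event_def by measurable

lemma measure_bad_event_le:
  assumes N: "N \<ge> 1" and \<beta>: "0 < \<beta>" "\<beta> \<le> 2 * real N" and r: "0 < r" "r < \<delta>"
    and D: "0 < D" "D \<le> 2 * real N * (Mf * r)"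
  shows "measure M (bad_event N \<beta> r D)
    \<le> 2 * exp (- \<beta>\<^sup>2 / (4 * real N)) + (2 * real N + 1) * (2 * exp (- D\<^sup>2 / (4 * real N * (Mf * r))))"
proof -
  define B2 where "B2 j = {\<omega> \<in> space M. D \<le> \<bar>real (count_le X N (grid_point N r j) \<omega>)
        - real (count_le X N \<xi> \<omega>) - real N * (F (grid_point N r j) - \<alpha>)\<bar>}" for j
  have B2_sets: "B2 j \<in> sets M" for j unfolding B2_def by measurable
  have "measure M (B2 j) \<le> 2 * exp (- D\<^sup>2 / (4 * real N * (Mf * r)))" if "j \<in> {- int N..int N}" for j
  proof -
    have near: "\<bar>grid_point N r j - \<xi>\<bar> \<le> r" using that r by (intro grid_point_near) auto
    then have "\<bar>F (grid_point N r j) - F \<xi>\<bar> \<le> Mf * \<bar>grid_point N r j - \<xi>\<bar>"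
      using F_lipschitz[of \<xi> "grid_point N r j"] r \<delta> by simp
    also have "\<dots> \<le> Mf * r" using near Mf by (simp add: mult_left_mono)
    finally have "\<bar>F (grid_point N r j) - F \<xi>\<bar> \<le> Mf * r" .
    then show ?thesis
      using count_le_increment_deviation[of N "Mf * r" "grid_point N r j" \<xi> D] N r D Mf
      by (simp add: B2_def F_\<xi>)
  qed
  then have "(\<Sum>j\<in>{- int N..int N}. measure M (B2 j)) \<le> (\<Sum>j\<in>{- int N..int N}. 2 * exp (- D\<^sup>2 / (4 * real N * (Mf * r))))"
    by (rule sum_mono)
  moreover have "measure M (\<Union>j\<in>{- int N..int N}. B2 j) \<le> (\<Sum>j\<in>{- int N..int N}. measure M (B2 j))"
    using B2_sets by (intro measure_UNION_le) auto
  ultimately have "measure M (\<Union>j\<in>{- int N..int N}. B2 j) \<le> (2 * real N + 1) * (2 * exp (- D\<^sup>2 / (4 * real N * (Mf * r))))"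
    by simp
  moreover have "measure M {\<omega> \<in> space M. \<beta> \<le> \<bar>real (count_le X N \<xi> \<omega>) - real N * \<alpha>\<bar>} \<le> 2 * exp (- \<beta>\<^sup>2 / (4 * real N))"
    using count_le_deviation[OF N \<beta>, of \<xi>] by (simp add: F_\<xi>)
  moreover have "measure M (bad_event N \<beta> r D) \<le> measure M {\<omega> \<in> space M. \<beta> \<le> \<bar>real (count_le X N \<xi> \<omega>) - real N * \<alpha>\<bar>}
      + measure M (\<Union>j\<in>{- int N..int N}. B2 j)"
    unfolding bad_event_def B2_def[symmetric] using B2_sets by (intro measure_Un_le) auto
  ultimately show ?thesis by linarith
qed

lemma count_deviation_off_bad_event:
  assumes \<omega>: "\<omega> \<in> space M" "\<omega> \<notin> bad_event N \<beta> r D"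
    and N: "N \<ge> 1" and r: "0 < r" "r < \<delta>" and t: "\<bar>t - \<xi>\<bar> \<le> r"
  shows "\<bar>real (count_le X N t \<omega>) - real (count_le X N \<xi> \<omega>) - real N * (F t - \<alpha>)\<bar> \<le> D + Mf * r"
proof (rule deviation_from_grid[OF N r(1) _ _ _ t])
  show "count_le X N s \<omega> \<le> count_le X N t \<omega>" if "s \<le> t" for s t
    using that by (rule count_le_mono)
  show "F t - F s \<le> Mf * (t - s)" if "\<bar>s - \<xi>\<bar> \<le> r" "\<bar>t - \<xi>\<bar> \<le> r" "s \<le> t" for s t
    using F_lipschitz[of s t] that r by simp
  show "\<bar>real (count_le X N (\<xi> + real_of_int j * r / real N) \<omega>) - real (count_le X N \<xi> \<omega>)
      - real N * (F (\<xi> + real_of_int j * r / real N) - \<alpha>)\<bar> \<le> D" if "- int N \<le> j" "j \<le> int N" for j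
  proof -
    have "j \<in> {- int N..int N}" using that by simp
    then have "\<omega> \<notin> {\<omega> \<in> space M. D \<le> \<bar>real (count_le X N (grid_point N r j) \<omega>)
        - real (count_le X N \<xi> \<omega>) - real N * (F (grid_point N r j) - \<alpha>)\<bar>}"
      using \<omega>(2) unfolding bad_event_def by blast
    then show ?thesis using \<omega>(1) by (simp add: grid_point_def)
  qed
qed (use Mf in simp)

(* Keeps the signed sum inside the indices 1..N, where order_stat is meaningful. *)
lemma one_le_count_le_off_bad_event:
  assumes \<omega>: "\<omega> \<in> space M" "\<omega> \<notin> bad_event N (B * real N * q\<^sup>2) r D"
    and q: "0 < q" "q \<le> 1" and B: "0 \<le> B" "2 * B * q < \<alpha>" and N: "2 \<le> \<alpha> * real N"
  shows "1 \<le> count_le X N \<xi> \<omega>"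
proof -
  have "q\<^sup>2 \<le> q" using q mult_left_le[of q q] by (simp add: power2_eq_square)
  then have "B * q\<^sup>2 \<le> \<alpha> / 2" using B mult_left_mono[of "q\<^sup>2" q B] by simp
  then have "B * q\<^sup>2 * real N \<le> \<alpha> / 2 * real N" by (intro mult_right_mono) simp_all
  then have "B * real N * q\<^sup>2 \<le> \<alpha> / 2 * real N" by (simp add: algebra_simps)
  moreover have "\<alpha> * real N - B * real N * q\<^sup>2 < real (count_le X N \<xi> \<omega>)"
    using \<omega> by (auto simp: bad_event_def abs_less_iff mult.commute)
  ultimately show ?thesis using N by simp
qed

definition remainder_constant :: "real \<Rightarrow> real \<Rightarrow> real \<Rightarrow> real \<Rightarrow> real" where
  "remainder_constant B K Ck A1 =
     (B + Ck + 1) * (\<bar>g0\<bar> * (Lf * K\<^sup>2 + A1 + Mf * K + 1) / f0 + Lg * K\<^sup>2)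
     + \<bar>g0\<bar> / (2 * f0) * (2 * B * Ck + Ck\<^sup>2 + B + Ck) + 1"

lemma remainder_constant_pos:
  assumes "0 \<le> B" "0 \<le> K" "0 \<le> Ck" "0 \<le> A1"
  shows "0 < remainder_constant B K Ck A1"
  unfolding remainder_constant_def using assms f0 Lf Lg Mf
  by (intro add_nonneg_pos add_nonneg_nonneg mult_nonneg_nonneg divide_nonneg_pos) auto

lemma remainder_le_off_bad_event:
  fixes kN :: int
  assumes \<omega>: "\<omega> \<in> space M" "\<omega> \<notin> bad_event N (B * real N * q\<^sup>2) (K * q\<^sup>2) (A1 * real N * q ^ 3)"
    and q: "0 < q" "q \<le> 1" "1 / real N \<le> q ^ 4"
    and B: "0 \<le> B" "2 * B * q < \<alpha>" and K: "K = (B + 1) / f0" "K * q\<^sup>2 < \<delta>"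
    and Ck: "0 \<le> Ck" "Ck + 2 \<le> \<alpha> * real N" "\<alpha> * real N + Ck \<le> real N"
    and kN: "\<bar>real_of_int kN - \<alpha> * real N\<bar> \<le> Ck"
    and A1: "0 \<le> A1" and small: "q * (A1 + (Ck + Lf * K\<^sup>2 + Mf * K + 1)) \<le> 1"
  shows "\<bar>bahadur_remainder X G \<xi> \<alpha> (g0 / f0) kN N \<omega>\<bar> \<le> remainder_constant B K Ck A1 * q ^ 5"
proof -
  define r where "r = K * q\<^sup>2"
  define D where "D = A1 * real N * q ^ 3 + Mf * r"
  define \<eta> where "\<eta> = (Lf * r\<^sup>2 + (D + 1) / real N) / f0"
  define cnt where "cnt t = count_le X N t \<omega>" for t
  define a where "a = real (cnt \<xi>) - \<alpha> * real N"
  define b where "b = real_of_int kN - \<alpha> * real N"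
  have N: "N \<ge> 1" using Ck \<alpha> by (cases N) auto
  have r: "0 < r" "r < \<delta>" using K q f0 B by (simp_all add: r_def)
  have a_bound: "\<bar>a\<bar> < B * real N * q\<^sup>2"
    using \<omega> by (auto simp: bad_event_def a_def cnt_def mult.commute)
  have D: "0 \<le> D" using A1 Mf r q by (simp add: D_def)
  have cnt_\<xi>: "1 \<le> cnt \<xi>"
    unfolding cnt_def using Ck by (intro one_le_count_le_off_bad_event[OF \<omega> q(1,2) B]) simp
  have "\<bar>a - b\<bar> / (real N * f0) + \<eta> \<le> r"
    by (rule radius_arith_bound[OF _ q _ _ _ _ _ f0 K(1) less_imp_le[OF a_bound] _ small r_def \<eta>_def D_def])
       (use N B Ck A1 Mf Lf kN in \<open>auto simp: b_def\<close>)
  then have range: "\<bar>real_of_int (kN - int (cnt \<xi>))\<bar> / (real N * f0) + \<eta> \<le> r"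
    by (simp add: a_def b_def abs_minus_commute)
  have "\<bar>conv_sum kN (int (cnt \<xi>)) (\<lambda>i. G (order_stat X N \<omega> i) - G \<xi>)
       + g0 / (real N * f0) * real_of_int \<bar>int (cnt \<xi>) - kN\<bar> * (real_of_int \<bar>int (cnt \<xi>) - kN\<bar> + 1) / 2\<bar>
     \<le> (real_of_int \<bar>int (cnt \<xi>) - kN\<bar> + 1) * (\<bar>g0\<bar> * \<eta> + Lg * r\<^sup>2)"
  proof (rule conv_sum_order_stat_expansion[where cnt=cnt and \<xi>=\<xi>, OF N _ _ _ _ f0 Lf Lg _ _ _ cnt_\<xi> _ range \<eta>_def])
    show "order_stat X N \<omega> i \<le> t \<longleftrightarrow> i \<le> int (cnt t)" if "1 \<le> i" "i \<le> int N" for i t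
      unfolding cnt_def using that by (rule order_stat_le_iff)
    show "\<bar>real (cnt t) - real (cnt \<xi>) - real N * (F t - \<alpha>)\<bar> \<le> D" if "\<bar>t - \<xi>\<bar> \<le> r" for t
      using count_deviation_off_bad_event[OF \<omega> N, of t] r that unfolding cnt_def D_def r_def by simp
    show "\<bar>F t - \<alpha> - f0 * (t - \<xi>)\<bar> \<le> Lf * (t - \<xi>)\<^sup>2" if "\<bar>t - \<xi>\<bar> \<le> r" for t
      using F_expansion that r by simp
    show "\<bar>G t - G \<xi> - g0 * (t - \<xi>)\<bar> \<le> Lg * (t - \<xi>)\<^sup>2" if "\<bar>t - \<xi>\<bar> \<le> r" for t
      using G_expansion that r by simp
    show "1 \<le> kN" "kN \<le> int N" using kN Ck by (simp_all add: abs_le_iff)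
    show "cnt \<xi> \<le> N" by (simp add: cnt_def count_le_le)
  qed (use D in simp)
  then have "\<bar>conv_sum kN (int (cnt \<xi>)) (\<lambda>i. G (order_stat X N \<omega> i) - G \<xi>)
       + g0 / (real N * f0) * \<bar>a - b\<bar> * (\<bar>a - b\<bar> + 1) / 2\<bar> \<le> (\<bar>a - b\<bar> + 1) * (\<bar>g0\<bar> * \<eta> + Lg * r\<^sup>2)"
    by (simp add: a_def b_def)
  from remainder_arith_bound[OF _ q _ _ _ _ _ _ _ f0 less_imp_le[OF a_bound] _ this r_def \<eta>_def D_def]
  show ?thesis
    using N B Ck A1 Mf Lf Lg kN K f0
    by (simp add: bahadur_remainder_def remainder_constant_def a_def b_def cnt_def Let_def)
qed

lemma measure_bad_event_polynomial:
  assumes N: "N \<ge> 1" and q: "0 < q" "real N * q ^ 4 = ln (real N)"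
    and B: "0 < B" "c \<le> B\<^sup>2 / 4" "B * q\<^sup>2 \<le> 2"
    and K: "0 < K" "K * q\<^sup>2 < \<delta>"
    and A1: "0 < A1" "4 * Mf * K * (c + 1) \<le> A1\<^sup>2" "A1 * q \<le> 2 * Mf * K"
  shows "measure M (bad_event N (B * real N * q\<^sup>2) (K * q\<^sup>2) (A1 * real N * q ^ 3)) \<le> 8 * real N powr (- c)"
proof -
  define n where "n = real N"
  have n: "1 \<le> n" using N by (simp add: n_def)
  have q4: "n * q ^ 4 = ln n" using q(2) by (simp add: n_def)
  have exponent_B: "- (B * n * q\<^sup>2)\<^sup>2 / (4 * n) = - (B\<^sup>2 / 4 * ln n)"
  proof -
    have "(B * n * q\<^sup>2)\<^sup>2 = (B\<^sup>2 * ln n) * n"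
      unfolding q4[symmetric] by (simp add: eval_nat_numeral algebra_simps)
    then show ?thesis using n by (simp add: field_simps)
  qed
  have exponent_A1: "- (A1 * n * q ^ 3)\<^sup>2 / (4 * n * (Mf * (K * q\<^sup>2))) = - (A1\<^sup>2 / (4 * Mf * K) * ln n)"
  proof -
    have "(A1 * n * q ^ 3)\<^sup>2 = (A1\<^sup>2 * ln n) * (n * q\<^sup>2)"
      unfolding q4[symmetric] by (simp add: eval_nat_numeral algebra_simps)
    moreover have "4 * n * (Mf * (K * q\<^sup>2)) = (4 * Mf * K) * (n * q\<^sup>2)" by (simp add: algebra_simps)
    moreover have "n * q\<^sup>2 \<noteq> 0" using n q by simp
    ultimately show ?thesis by simp
  qed
  have "measure M (bad_event N (B * n * q\<^sup>2) (K * q\<^sup>2) (A1 * n * q ^ 3))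
      \<le> 2 * exp (- (B * n * q\<^sup>2)\<^sup>2 / (4 * n))
        + (2 * n + 1) * (2 * exp (- (A1 * n * q ^ 3)\<^sup>2 / (4 * n * (Mf * (K * q\<^sup>2)))))"
  proof (rule measure_bad_event_le[OF N, folded n_def])
    show "A1 * n * q ^ 3 \<le> 2 * n * (Mf * (K * q\<^sup>2))"
      using mult_right_mono[OF A1(3), of "n * q\<^sup>2"] q n by (simp add: power2_eq_square power3_eq_cube algebra_simps)
  qed (use B K A1 q n in \<open>auto simp: mult.commute mult.left_commute\<close>)
  also have "\<dots> \<le> 2 * n powr (- c) + (2 * n + 1) * (2 * n powr (- (c + 1)))"
    unfolding exponent_B exponent_A1 using A1 B Mf K n
    by (intro add_mono mult_left_mono exp_neg_mult_ln_le) (simp_all add: field_simps)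
  also have "(2 * n + 1) * (2 * n powr (- (c + 1))) = (2 + 1 / n) * 2 * n powr (- c)"
    using n by (simp add: powr_diff powr_minus field_simps)
  also have "\<dots> \<le> 3 * 2 * n powr (- c)" using n by (intro mult_right_mono) auto
  finally show ?thesis by (simp add: n_def)
qed

lemma remainder_tail_at:
  fixes kN :: int
  assumes B: "0 < B" "c \<le> B\<^sup>2 / 4" and K: "K = (B + 1) / f0"
    and A1: "0 < A1" "4 * Mf * K * (c + 1) \<le> A1\<^sup>2" and Ck: "0 \<le> Ck"
    and kN: "\<bar>real_of_int kN - \<alpha> * real N\<bar> \<le> Ck"
    and N: "3 \<le> real N" "Ck + 2 \<le> \<alpha> * real N" "Ck \<le> (1 - \<alpha>) * real N"
    and q_def: "q = (ln (real N) / real N) powr (1/4)"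
    and small: "q < 1" "2 * B * q < \<alpha>" "2 * K * q < \<delta>" "A1 * q < 2 * Mf * K"
      "q * (A1 + (Ck + Lf * K\<^sup>2 + Mf * K + 1)) < 1"
  shows "\<exists>E\<in>sets M. {\<omega> \<in> space M. \<bar>bahadur_remainder X G \<xi> \<alpha> (g0 / f0) kN N \<omega>\<bar>
        > remainder_constant B K Ck A1 * (ln (real N) / real N) powr (5/4)} \<subseteq> E
      \<and> measure M E \<le> 8 * real N powr (- c)"
proof -
  have q: "0 < q" "real N * q ^ 4 = ln (real N)" "1 / real N \<le> q ^ 4"
    "q ^ 5 = (ln (real N) / real N) powr (5/4)"
    using log_rate_powers[of "real N"] N by (simp_all add: q_def)
  have K_pos: "0 < K" using B f0 by (simp add: K)
  have "q\<^sup>2 \<le> q" using q small mult_left_le[of q q] by (simp add: power2_eq_square)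
  then have "B * q\<^sup>2 \<le> B * q" "K * q\<^sup>2 \<le> K * q" using B K_pos by (simp_all add: mult_left_mono)
  moreover have "0 < K * q" using K_pos q by simp
  ultimately have Bq: "B * q\<^sup>2 \<le> 2" and Kq: "K * q\<^sup>2 < \<delta>" using small \<alpha> by linarith+
  define E where "E = bad_event N (B * real N * q\<^sup>2) (K * q\<^sup>2) (A1 * real N * q ^ 3)"
  have "measure M E \<le> 8 * real N powr (- c)"
    unfolding E_def using N q B Bq K_pos Kq A1 small
    by (intro measure_bad_event_polynomial) (auto simp: algebra_simps)
  moreover have "\<bar>bahadur_remainder X G \<xi> \<alpha> (g0 / f0) kN N \<omega>\<bar> \<le> remainder_constant B K Ck A1 * q ^ 5"
    if "\<omega> \<in> space M" "\<omega> \<notin> E" for \<omega>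
    using that N q B K Kq A1 Ck kN small unfolding E_def
    by (intro remainder_le_off_bad_event) (auto simp: algebra_simps)
  moreover have "E \<in> sets M" unfolding E_def by (rule bad_event_sets)
  ultimately show ?thesis using q(4) by (intro bexI[of _ E] conjI subsetI) force+
qed

theorem remainder_tail_bound:
  assumes k: "\<exists>C. \<forall>\<^sub>F N in sequentially. \<bar>real_of_int (k N) - \<alpha> * real N\<bar> \<le> C"
  shows "\<forall>c>0. \<exists>A>0. \<exists>C N0. \<forall>N\<ge>N0. \<exists>E\<in>sets M.
     {\<omega> \<in> space M. \<bar>bahadur_remainder X G \<xi> \<alpha> (g0 / f0) (k N) N \<omega>\<bar> > A * (ln (real N) / real N) powr (5/4)} \<subseteq> E
     \<and> measure M E \<le> C * real N powr (- c)"
proof (intro allI impI)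
  fix c :: real assume c: "0 < c"
  obtain C0 where C0: "\<forall>\<^sub>F N in sequentially. \<bar>real_of_int (k N) - \<alpha> * real N\<bar> \<le> C0" using k by blast
  define Ck where "Ck = \<bar>C0\<bar>"
  define B where "B = 2 * sqrt c + 1"
  define K where "K = (B + 1) / f0"
  define A1 where "A1 = 2 * sqrt (Mf * K * (c + 1)) + 1"
  define q where "q N = (ln (real N) / real N) powr (1/4)" for N :: nat
  have B: "0 < B" "c \<le> B\<^sup>2 / 4" using c four_mult_le_sq_two_sqrt_plus_one[of c] by (simp_all add: B_def add_nonneg_pos)
  have K: "0 < K" using B f0 by (simp add: K_def)
  have A1: "0 < A1" "4 * Mf * K * (c + 1) \<le> A1\<^sup>2"
    using c K Mf four_mult_le_sq_two_sqrt_plus_one[of "Mf * K * (c + 1)"] by (simp_all add: A1_def add_nonneg_pos)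
  have "\<forall>\<^sub>F N in sequentially. \<bar>real_of_int (k N) - \<alpha> * real N\<bar> \<le> Ck
      \<and> 3 \<le> 1 * real N \<and> Ck + 2 \<le> \<alpha> * real N \<and> Ck \<le> (1 - \<alpha>) * real N
      \<and> q N * 1 < 1 \<and> q N * (2 * B) < \<alpha> \<and> q N * (2 * K) < \<delta> \<and> q N * A1 < 2 * Mf * K
      \<and> q N * (A1 + (Ck + Lf * K\<^sup>2 + Mf * K + 1)) < 1"
    using C0 \<alpha> \<delta> Mf K unfolding q_def Ck_def
    by (intro eventually_conj eventually_le_mult_real_sequentially log_rate_eventually_small)
       (auto elim: eventually_mono)
  then obtain N0 where N0: "\<And>N. N \<ge> N0 \<Longrightarrow> \<bar>real_of_int (k N) - \<alpha> * real N\<bar> \<le> Ck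
      \<and> 3 \<le> real N \<and> Ck + 2 \<le> \<alpha> * real N \<and> Ck \<le> (1 - \<alpha>) * real N
      \<and> q N < 1 \<and> 2 * B * q N < \<alpha> \<and> 2 * K * q N < \<delta> \<and> A1 * q N < 2 * Mf * K
      \<and> q N * (A1 + (Ck + Lf * K\<^sup>2 + Mf * K + 1)) < 1"
    by (auto simp: eventually_sequentially algebra_simps)
  have "0 < remainder_constant B K Ck A1" using B K A1 by (intro remainder_constant_pos) (simp_all add: Ck_def)
  moreover have "\<exists>E\<in>sets M. {\<omega> \<in> space M. \<bar>bahadur_remainder X G \<xi> \<alpha> (g0 / f0) (k N) N \<omega>\<bar>
        > remainder_constant B K Ck A1 * (ln (real N) / real N) powr (5/4)} \<subseteq> E
      \<and> measure M E \<le> 8 * real N powr (- c)" if "N \<ge> N0" for N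
    using N0[OF that] B A1 by (intro remainder_tail_at[OF _ _ K_def _ _ _ _ _ _ _ q_def]) (auto simp: Ck_def)
  ultimately show "\<exists>A>0. \<exists>C N0. \<forall>N\<ge>N0. \<exists>E\<in>sets M.
     {\<omega> \<in> space M. \<bar>bahadur_remainder X G \<xi> \<alpha> (g0 / f0) (k N) N \<omega>\<bar> > A * (ln (real N) / real N) powr (5/4)} \<subseteq> E
     \<and> measure M E \<le> C * real N powr (- c)"
    by blast
qed
end

theorem lemma3p2:
  fixes M :: "'a measure" and X :: "nat \<Rightarrow> 'a \<Rightarrow> real"
    and F f G g :: "real \<Rightarrow> real" and \<alpha> :: real and k :: "nat \<Rightarrow> int"
  assumes "prob_space M"
    and rv: "\<And>i. X i \<in> borel_measurable M"
    and indep: "prob_space.indep_vars M (\<lambda>_. borel) X UNIV"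
    and ident: "\<And>i. distr M borel (X i) = distr M borel (X 0)"
    and F_def: "\<And>x. F x = measure M {\<omega> \<in> space M. X 0 \<omega> \<le> x}"
    and \<alpha>: "0 < \<alpha>" "\<alpha> < 1"
    and f_nbhd: "\<exists>\<delta>>0. \<exists>L. \<forall>x\<in>{quantile F \<alpha> - \<delta> <..< quantile F \<alpha> + \<delta>}.
        (F has_real_derivative f x) (at x) \<and> f x > 0 \<and>
        (\<forall>y\<in>{quantile F \<alpha> - \<delta> <..< quantile F \<alpha> + \<delta>}. \<bar>f x - f y\<bar> \<le> L * \<bar>x - y\<bar>)"
    and g_nbhd: "\<exists>\<delta>>0. \<exists>L. \<forall>x\<in>{quantile F \<alpha> - \<delta> <..< quantile F \<alpha> + \<delta>}.
        (G has_real_derivative g x) (at x) \<and>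
        (\<forall>y\<in>{quantile F \<alpha> - \<delta> <..< quantile F \<alpha> + \<delta>}. \<bar>g x - g y\<bar> \<le> L * \<bar>x - y\<bar>)"
    and k: "\<exists>C. \<forall>\<^sub>F N in sequentially. \<bar>real_of_int (k N) - \<alpha> * real N\<bar> \<le> C"
  shows "\<forall>c>0. \<exists>A>0. \<exists>C N0. \<forall>N\<ge>N0. \<exists>E\<in>sets M.
     {\<omega> \<in> space M.
        \<bar>(let \<xi> = quantile F \<alpha>; Na = count_le X N \<xi> \<omega> in
           conv_sum (k N) (int Na) (\<lambda>i. G (order_stat X N \<omega> i) - G \<xi>) / real N
           - ( - (real Na - \<alpha> * real N)\<^sup>2 / (2 * (real N)\<^sup>2) * (g \<xi> / f \<xi>)))\<bar>
        > A * (ln (real N) / real N) powr (5/4)} \<subseteq> E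
     \<and> measure M E \<le> C * real N powr (- c)"
proof -
  interpret iid_sample M X F
    using assms(1-5) by (simp add: iid_sample_def iid_sample_axioms_def)
  define \<xi> where "\<xi> = quantile F \<alpha>"
  have "\<exists>\<delta>>0. \<exists>L. \<forall>x\<in>{\<xi> - \<delta><..<\<xi> + \<delta>}. (F has_real_derivative f x) (at x) \<and>
      (\<forall>y\<in>{\<xi> - \<delta><..<\<xi> + \<delta>}. \<bar>f x - f y\<bar> \<le> L * \<bar>x - y\<bar>)"
    using f_nbhd unfolding \<xi>_def by blast
  then obtain \<delta>F LF MF where \<delta>F: "0 < \<delta>F" "0 \<le> LF" "0 < MF" "isCont F \<xi>"
    and F_exp: "\<And>t. \<bar>t - \<xi>\<bar> < \<delta>F \<Longrightarrow> \<bar>F t - F \<xi> - f \<xi> * (t - \<xi>)\<bar> \<le> LF * (t - \<xi>)\<^sup>2"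
    and F_lip: "\<And>s t. \<bar>s - \<xi>\<bar> < \<delta>F \<Longrightarrow> \<bar>t - \<xi>\<bar> < \<delta>F \<Longrightarrow> \<bar>F t - F s\<bar> \<le> MF * \<bar>t - s\<bar>"
    by (rule lipschitz_deriv_local_bounds) blast
  obtain \<delta>G LG where \<delta>G: "0 < \<delta>G" "0 \<le> LG"
    and G_exp: "\<And>t. \<bar>t - \<xi>\<bar> < \<delta>G \<Longrightarrow> \<bar>G t - G \<xi> - g \<xi> * (t - \<xi>)\<bar> \<le> LG * (t - \<xi>)\<^sup>2"
    using g_nbhd unfolding \<xi>_def by (rule lipschitz_deriv_local_bounds) blast
  have "0 < f \<xi>" using f_nbhd unfolding \<xi>_def by force
  have "F \<xi> = \<alpha>" using F_quantile[OF \<alpha>] \<delta>F by (simp add: \<xi>_def)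
  interpret bahadur_setting M X F G \<alpha> \<xi> "min \<delta>F \<delta>G" "f \<xi>" "g \<xi>" LF LG MF
    by unfold_locales (use \<alpha> \<delta>F \<delta>G \<open>0 < f \<xi>\<close> \<open>F \<xi> = \<alpha>\<close> F_exp G_exp F_lip in auto)
  show ?thesis
    using remainder_tail_bound[OF k] unfolding bahadur_remainder_def \<xi>_def Let_def .
qed

end
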